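(* Let $n\ge4$ be even. There exists a quantum query algorithm making exactly 2 queries to the oracle $O_x$ such that, for every $x\in\{0,1\}^n$ with $|x|=n/2$, the algorithm outputs $1$ with probability $1$, and for every $x\in\{0,1\}^n$ with $|x|\in\{0,1,n-1,n\}$, the algorithm outputs $0$ with probability $1$.
   Context: $|x|$ denotes the Hamming weight of a bit string $x$. Quantum query model: a $t$-query quantum query algorithm on inputs $x\in\{0,1\}^n$ acts on a Hilbert space $\mathcal H_{\rm in}\otimes\mathcal H_{\rm work}\otimes\mathcal H_{\rm out}$, where $\mathcal H_{\rm in}$ has orthonormal basis $|0\rangle,\dots,|n\rangle$, $\mathcal H_{\rm work}$ is a finite-dimensional workspace of arbitrary size, and $\mathcal H_{\rm out}$ is one qubit. It is specified by input-independent unitaries $U_0,\dots,U_t$, and on input $x$ produces the state $U_tO_xU_{t-1}O_x\cdots O_xU_0|0\rangle$ ($t$ applications of $O_x$), where the oracle $O_x$ acts on $\mathcal H_{\rm in}$ by $|i\rangle\mapsto(-1)^{x_i}|i\rangle$ with the convention $x_0=0$ (and as the identity on the other registers). The output is obtained by measuring $\mathcal H_{\rm out}$ in the computational basis. *)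

theory Defs
  imports Complex_Main
begin

text \<open>Quantum query model on H_in (x) H_work (x) H_out, with
  H_in having basis |0>,...,|n>, H_work of dimension m (m >= 1), H_out a qubit.
  Basis vector |i,w,b> is encoded as the index (i*m + w)*2 + b,
  so the total dimension is (n+1)*m*2.  Operators are matrices
  nat => nat => complex (row, column), vectors are nat => complex,
  both only meaningful on indices below the dimension.\<close>

definition qdim :: "nat \<Rightarrow> nat \<Rightarrow> nat" where
  "qdim n m = (n + 1) * m * 2"

definition in_index :: "nat \<Rightarrow> nat \<Rightarrow> nat" where
  "in_index m k = k div (2 * m)"

definition out_bit :: "nat \<Rightarrow> nat" where
  "out_bit k = k mod 2"

definition unitary_op :: "nat \<Rightarrow> (nat \<Rightarrow> nat \<Rightarrow> complex) \<Rightarrow> bool" where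
  "unitary_op N U \<longleftrightarrow>
     (\<forall>j<N. \<forall>k<N. (\<Sum>l<N. cnj (U l j) * U l k) = (if j = k then 1 else 0))"

definition apply_op :: "nat \<Rightarrow> (nat \<Rightarrow> nat \<Rightarrow> complex) \<Rightarrow> (nat \<Rightarrow> complex) \<Rightarrow> (nat \<Rightarrow> complex)" where
  "apply_op N U v = (\<lambda>r. if r < N then (\<Sum>c<N. U r c * v c) else 0)"

text \<open>Input bits x_1..x_n are the list entries x!0..x!(n-1); x_0 = 0.\<close>
definition xbit :: "bool list \<Rightarrow> nat \<Rightarrow> bool" where
  "xbit x i = (if i = 0 then False else x ! (i - 1))"

definition query_op :: "nat \<Rightarrow> nat \<Rightarrow> bool list \<Rightarrow> (nat \<Rightarrow> complex) \<Rightarrow> (nat \<Rightarrow> complex)" where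
  "query_op n m x v = (\<lambda>k. if k < qdim n m then
       (if xbit x (in_index m k) then - v k else v k) else 0)"

definition init_state :: "nat \<Rightarrow> complex" where
  "init_state = (\<lambda>k. if k = 0 then 1 else 0)"

text \<open>Final state U_t O_x U_{t-1} ... O_x U_0 |0>, where Us = [U_1,...,U_t].\<close>
definition final_state :: "nat \<Rightarrow> nat \<Rightarrow> bool list \<Rightarrow> (nat \<Rightarrow> nat \<Rightarrow> complex)
    \<Rightarrow> (nat \<Rightarrow> nat \<Rightarrow> complex) list \<Rightarrow> (nat \<Rightarrow> complex)" where
  "final_state n m x U0 Us =
     fold (\<lambda>U v. apply_op (qdim n m) U (query_op n m x v)) Us
          (apply_op (qdim n m) U0 init_state)"

definition prob_output :: "nat \<Rightarrow> nat \<Rightarrow> bool list \<Rightarrow> (nat \<Rightarrow> nat \<Rightarrow> complex)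
    \<Rightarrow> (nat \<Rightarrow> nat \<Rightarrow> complex) list \<Rightarrow> nat \<Rightarrow> real" where
  "prob_output n m x U0 Us b =
     (\<Sum>k | k < qdim n m \<and> out_bit k = b. (cmod (final_state n m x U0 Us k))\<^sup>2)"

definition hamming_weight :: "bool list \<Rightarrow> nat" where
  "hamming_weight x = length (filter id x)"

end

theory Submission
  imports Defs
begin

(* All operators are real, so they are built as real orthogonal matrices and lifted to complex
   unitaries at the end.  The workspace holds registers (a,b,c) with values in {0..n}; the
   branches are the triples T = (a,b,c) of distinct elements of {1..n}.  With z_i = (-1)^(x_i):
   - U_init prepares phi = normT * SUM_T (ampB|b> + ampC|c>)|T>|1>, ampB = 1/sqrt n;
   - after the first query, U_mid rotates every branch so that after the second query the state
     is psi x = normT * SUM_T (ampB ampC z_a (z_b - z_c)|a> + (ampB^2 + ampC^2 z_b z_c)|b>)|T>|1>;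
   - U_final reflects about the span of 2n vectors SUM_T (d_jb + d_jc)|b>|T> and
     SUM_T (d_jb - d_jc)|a>|T>, tensored with (|0> - |1>)/sqrt 2.
   For |x| = n/2, psi x is orthogonal to that span and keeps output bit 1; for |x| in
   {0,1,n-1,n} its branch part lies in the span and the reflection moves it to output bit 0.
   Sections: reflections about spans of vector families; Hamming weight; index encoding; the
   three unitaries; balanced and rejected inputs; assembly of the theorem. *)

section \<open>Real matrices and reflections\<close>

text \<open>Matrices and vectors are functions on indices, only meaningful below the dimension N.\<close>

definition mvec :: "nat \<Rightarrow> (nat \<Rightarrow> nat \<Rightarrow> real) \<Rightarrow> (nat \<Rightarrow> real) \<Rightarrow> nat \<Rightarrow> real" where
  "mvec N A v = (\<lambda>r. if r < N then (\<Sum>c<N. A r c * v c) else 0)"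

definition mmul :: "nat \<Rightarrow> (nat \<Rightarrow> nat \<Rightarrow> real) \<Rightarrow> (nat \<Rightarrow> nat \<Rightarrow> real) \<Rightarrow> nat \<Rightarrow> nat \<Rightarrow> real" where
  "mmul N A B = (\<lambda>r c. \<Sum>l<N. A r l * B l c)"

definition dotp :: "nat \<Rightarrow> (nat \<Rightarrow> real) \<Rightarrow> (nat \<Rightarrow> real) \<Rightarrow> real" where
  "dotp N u v = (\<Sum>c<N. u c * v c)"

definition orth_mat :: "nat \<Rightarrow> (nat \<Rightarrow> nat \<Rightarrow> real) \<Rightarrow> bool" where
  "orth_mat N A \<longleftrightarrow> (\<forall>j<N. \<forall>k<N. (\<Sum>l<N. A l j * A l k) = (if j = k then 1 else 0))"

text \<open>For a family of vectors f indexed by K and a matrix H (a generalised inverse of the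
  Gram matrix of f), proj K f H is the matrix SUM f_k H_kl f_l^T and reflection K f H is
  I - 2 proj K f H.  When H is chosen correctly this is the reflection about span f.\<close>

definition proj :: "'k set \<Rightarrow> ('k \<Rightarrow> nat \<Rightarrow> real) \<Rightarrow> ('k \<Rightarrow> 'k \<Rightarrow> real) \<Rightarrow> nat \<Rightarrow> nat \<Rightarrow> real" where
  "proj K f H = (\<lambda>r c. \<Sum>k\<in>K. \<Sum>l\<in>K. f k r * H k l * f l c)"

definition reflection :: "'k set \<Rightarrow> ('k \<Rightarrow> nat \<Rightarrow> real) \<Rightarrow> ('k \<Rightarrow> 'k \<Rightarrow> real) \<Rightarrow> nat \<Rightarrow> nat \<Rightarrow> real" where
  "reflection K f H = (\<lambda>r c. (if r = c then 1 else 0) - 2 * proj K f H r c)"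

lemma sum_swap3:
  "(\<Sum>r\<in>R. \<Sum>c\<in>C. \<Sum>d\<in>D. g r c d) = (\<Sum>c\<in>C. \<Sum>d\<in>D. \<Sum>r\<in>R. g r c d)"
  by (simp add: sum.swap[of _ R])

lemma reflection_apply:
  assumes "r < N"
  shows "mvec N (reflection K f H) v r = v r - 2 * (\<Sum>k\<in>K. \<Sum>l\<in>K. f k r * H k l * dotp N (f l) v)"
proof -
  have e: "reflection K f H r c * v c = (if r = c then v c else 0) - 2 * (proj K f H r c * v c)" for c
    unfolding reflection_def by (simp add: left_diff_distrib)
  have "(\<Sum>c<N. reflection K f H r c * v c)
      = (\<Sum>c<N. (if r = c then v c else 0)) - 2 * (\<Sum>c<N. proj K f H r c * v c)"
    unfolding e by (simp add: sum_subtractf sum_distrib_left)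
  also have "(\<Sum>c<N. (if r = c then v c else 0)) = v r" using assms by simp
  also have "(\<Sum>c<N. proj K f H r c * v c) = (\<Sum>k\<in>K. \<Sum>l\<in>K. f k r * H k l * dotp N (f l) v)"
    unfolding proj_def dotp_def
    by (simp add: sum_distrib_left sum_distrib_right mult.assoc sum.swap[of _ "{..<N}"])
  finally show ?thesis using assms unfolding mvec_def by simp
qed

lemma orth_mat_of_idempotent:
  fixes Q :: "nat \<Rightarrow> nat \<Rightarrow> real"
  assumes sym: "\<And>r c. Q r c = Q c r" and idem: "\<And>j k. k < N \<Longrightarrow> (\<Sum>l<N. Q j l * Q l k) = Q j k"
  shows "orth_mat N (\<lambda>r c. (if r = c then 1 else 0) - 2 * Q r c)"
  unfolding orth_mat_def
proof (intro allI impI)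
  fix j k assume j: "j < N" and k: "k < N"
  have e: "((if l = j then 1 else 0) - 2 * Q l j) * ((if l = k then 1 else 0) - 2 * Q l k)
    = (if l = j \<and> l = k then 1 else 0) - (if l = j then 2 * Q j k else 0)
      - (if l = k then 2 * Q j k else 0) + 4 * (Q j l * Q l k)" for l
    using sym[of k j] by (simp add: algebra_simps sym[of l j])
  have s1: "(\<Sum>l<N. (if l = j \<and> l = k then 1 else 0)) = (if j = k then 1 else (0::real))"
    using j by (cases "j = k") (simp_all add:, auto intro!: sum.neutral)
  have s2: "(\<Sum>l<N. (if l = j then 2 * Q j k else 0)) = 2 * Q j k" using j by simp
  have s3: "(\<Sum>l<N. (if l = k then 2 * Q j k else 0)) = 2 * Q j k" using k by simp
  have s4: "(\<Sum>l<N. 4 * (Q j l * Q l k)) = 4 * Q j k"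
    using idem[OF k] by (simp add: sum_distrib_left[symmetric])
  show "(\<Sum>l<N. ((if l = j then 1 else 0) - 2 * Q l j) * ((if l = k then 1 else 0) - 2 * Q l k))
      = (if j = k then 1 else 0)"
    unfolding e sum.distrib sum_subtractf s1 s2 s3 s4 by simp
qed

text \<open>If H is symmetric and proj K f H fixes every f_j (i.e. F H G = F for the family matrix F
  and its Gram matrix G), then proj K f H is an orthogonal projection and the reflection is
  orthogonal.\<close>
lemma reflection_orthogonal:
  fixes f :: "'k \<Rightarrow> nat \<Rightarrow> real"
  assumes H_sym: "\<And>k l. k \<in> K \<Longrightarrow> l \<in> K \<Longrightarrow> H k l = H l k"
    and fixes_family: "\<And>j r. j \<in> K \<Longrightarrow> r < N \<Longrightarrow>
          (\<Sum>k\<in>K. \<Sum>l\<in>K. f k r * H k l * dotp N (f l) (f j)) = f j r"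
  shows "orth_mat N (reflection K f H)"
proof -
  let ?Q = "proj K f H"
  have sym: "?Q r c = ?Q c r" for r c
  proof -
    have "?Q r c = (\<Sum>l\<in>K. \<Sum>k\<in>K. f k r * H k l * f l c)" unfolding proj_def by (rule sum.swap)
    also have "\<dots> = ?Q c r" unfolding proj_def
      by (intro sum.cong refl) (simp add: H_sym mult.commute mult.left_commute)
    finally show ?thesis .
  qed
  have fQ: "(\<Sum>l<N. f j l * ?Q l k) = f j k" if "j \<in> K" "k < N" for j k
  proof -
    have "(\<Sum>l<N. f j l * ?Q l k) = (\<Sum>l<N. ?Q k l * f j l)" by (simp add: sym mult.commute)
    also have "\<dots> = (\<Sum>k1\<in>K. \<Sum>l1\<in>K. f k1 k * H k1 l1 * dotp N (f l1) (f j))"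
      unfolding proj_def dotp_def
      by (simp add: sum_distrib_left sum_distrib_right mult.assoc sum.swap[of _ "{..<N}"])
    also have "\<dots> = f j k" using fixes_family that by simp
    finally show ?thesis .
  qed
  have Q_eq: "?Q j l = (\<Sum>k1\<in>K. \<Sum>l1\<in>K. f k1 j * H k1 l1 * f l1 l)" for j l
    by (simp add: proj_def)
  have idem: "(\<Sum>l<N. ?Q j l * ?Q l k) = ?Q j k" if "k < N" for j k
  proof -
    have "(\<Sum>l<N. ?Q j l * ?Q l k) = (\<Sum>k1\<in>K. \<Sum>l1\<in>K. f k1 j * H k1 l1 * (\<Sum>l<N. f l1 l * ?Q l k))"
      unfolding Q_eq[of j]
      by (simp add: sum_distrib_left sum_distrib_right mult.assoc sum.swap[of _ "{..<N}"])
    also have "\<dots> = ?Q j k" unfolding Q_eq[of j k] using fQ[OF _ that] by simp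
    finally show ?thesis .
  qed
  show ?thesis unfolding reflection_def by (rule orth_mat_of_idempotent[OF sym idem])
qed

lemma proj_combination:
  fixes f :: "'k \<Rightarrow> nat \<Rightarrow> real"
  assumes fixes_family: "\<And>u. u \<in> K \<Longrightarrow> (\<Sum>k\<in>K. \<Sum>l\<in>K. f k r * H k l * dotp N (f l) (f u)) = f u r"
    and comb: "\<And>l. dotp N (f l) v = (\<Sum>u\<in>K. c u * dotp N (f l) (f u))"
    and fin: "finite K"
  shows "(\<Sum>k\<in>K. \<Sum>l\<in>K. f k r * H k l * dotp N (f l) v) = (\<Sum>u\<in>K. c u * f u r)"
proof -
  have "(\<Sum>k\<in>K. \<Sum>l\<in>K. f k r * H k l * dotp N (f l) v)
      = (\<Sum>k\<in>K. \<Sum>l\<in>K. \<Sum>u\<in>K. c u * (f k r * H k l * dotp N (f l) (f u)))"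
    unfolding comb by (simp add: sum_distrib_left mult_ac)
  also have "\<dots> = (\<Sum>u\<in>K. \<Sum>k\<in>K. \<Sum>l\<in>K. c u * (f k r * H k l * dotp N (f l) (f u)))"
    by (rule sum_swap3[symmetric])
  also have "\<dots> = (\<Sum>u\<in>K. c u * (\<Sum>k\<in>K. \<Sum>l\<in>K. f k r * H k l * dotp N (f l) (f u)))"
    by (simp add: sum_distrib_left)
  also have "\<dots> = (\<Sum>u\<in>K. c u * f u r)" using fixes_family by simp
  finally show ?thesis .
qed

lemma orthogonal_norm:
  assumes "orth_mat N A"
  shows "(\<Sum>r<N. (mvec N A v r)^2) = (\<Sum>c<N. (v c)^2)"
proof -
  have "(\<Sum>r<N. (mvec N A v r)^2) = (\<Sum>r<N. \<Sum>c<N. \<Sum>d<N. (A r c * v c) * (A r d * v d))"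
    unfolding mvec_def power2_eq_square by (simp add: sum_product)
  also have "\<dots> = (\<Sum>c<N. \<Sum>d<N. \<Sum>r<N. (A r c * v c) * (A r d * v d))" by (rule sum_swap3)
  also have "\<dots> = (\<Sum>c<N. \<Sum>d<N. v c * v d * (\<Sum>r<N. A r c * A r d))"
    by (simp add: sum_distrib_left mult.commute mult.left_commute)
  also have "\<dots> = (\<Sum>c<N. \<Sum>d<N. v c * v d * (if c = d then 1 else 0))"
    using assms unfolding orth_mat_def by (intro sum.cong refl) simp
  also have "\<dots> = (\<Sum>c<N. v c * v c)" by (simp add: if_distrib cong: if_cong)
  finally show ?thesis by (simp add: power2_eq_square)
qed

lemma orthogonal_mmul:
  assumes "orth_mat N A" "orth_mat N B"
  shows "orth_mat N (mmul N A B)"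
  unfolding orth_mat_def
proof (intro allI impI)
  fix j k assume j: "j < N" and k: "k < N"
  have "(\<Sum>l<N. mmul N A B l j * mmul N A B l k) = (\<Sum>l<N. \<Sum>p<N. \<Sum>q<N. (A l p * B p j) * (A l q * B q k))"
    unfolding mmul_def by (simp add: sum_product)
  also have "\<dots> = (\<Sum>p<N. \<Sum>q<N. \<Sum>l<N. (A l p * B p j) * (A l q * B q k))" by (rule sum_swap3)
  also have "\<dots> = (\<Sum>p<N. \<Sum>q<N. B p j * B q k * (\<Sum>l<N. A l p * A l q))"
    by (simp add: sum_distrib_left mult.commute mult.left_commute)
  also have "\<dots> = (\<Sum>p<N. \<Sum>q<N. B p j * B q k * (if p = q then 1 else 0))"
    using assms(1) unfolding orth_mat_def by (intro sum.cong refl) simp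
  also have "\<dots> = (\<Sum>p<N. B p j * B p k)" by (simp add: if_distrib cong: if_cong)
  also have "\<dots> = (if j = k then 1 else 0)" using assms(2) j k unfolding orth_mat_def by simp
  finally show "(\<Sum>l<N. mmul N A B l j * mmul N A B l k) = (if j = k then 1 else 0)" .
qed

lemma mvec_mmul: "mvec N (mmul N A B) v = mvec N A (mvec N B v)"
proof (rule ext)
  fix r
  have "(\<Sum>c<N. (\<Sum>l<N. A r l * B l c) * v c) = (\<Sum>c<N. \<Sum>l<N. A r l * (B l c * v c))"
    by (simp add: sum_distrib_right mult.assoc)
  also have "\<dots> = (\<Sum>l<N. \<Sum>c<N. A r l * (B l c * v c))" by (rule sum.swap)
  also have "\<dots> = (\<Sum>l<N. A r l * (\<Sum>c<N. B l c * v c))" by (simp add: sum_distrib_left)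
  finally have "(\<Sum>c<N. (\<Sum>l<N. A r l * B l c) * v c) = (\<Sum>l<N. A r l * (\<Sum>c<N. B l c * v c))" .
  then show "mvec N (mmul N A B) v r = mvec N A (mvec N B v) r"
    unfolding mvec_def mmul_def by (auto intro!: sum.cong)
qed

definition cmat :: "(nat \<Rightarrow> nat \<Rightarrow> real) \<Rightarrow> nat \<Rightarrow> nat \<Rightarrow> complex" where
  "cmat A = (\<lambda>r c. complex_of_real (A r c))"

lemma apply_op_of_real:
  "apply_op N (cmat A) (\<lambda>c. complex_of_real (v c)) = (\<lambda>r. complex_of_real (mvec N A v r))"
  unfolding apply_op_def mvec_def cmat_def by (rule ext) simp

lemma unitary_of_real:
  assumes "orth_mat N A"
  shows "unitary_op N (cmat A)"
  unfolding unitary_op_def cmat_def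
proof (intro allI impI)
  fix j k assume "j < N" "k < N"
  then have "complex_of_real (\<Sum>l<N. A l j * A l k) = (if j = k then 1 else 0)"
    using assms unfolding orth_mat_def by simp
  then show "(\<Sum>l<N. cnj (complex_of_real (A l j)) * complex_of_real (A l k)) = (if j = k then 1 else 0)"
    by simp
qed

section \<open>Hamming weight\<close>

lemma hamming_weight_Cons: "hamming_weight (a # x) = (if a then 1 else 0) + hamming_weight x"
  unfolding hamming_weight_def by simp

lemma sum_signs_list: "(\<Sum>k<length x. (if x ! k then -1 else 1::real)) = real (length x) - 2 * real (hamming_weight x)"
proof (induction x)
  case Nil
  then show ?case by (simp add: hamming_weight_def)
next
  case (Cons a x)
  have "(\<Sum>k<length (a # x). (if (a # x) ! k then -1 else 1::real)) = (if a then -1 else 1) + (\<Sum>k<length x. (if x ! k then -1 else 1::real))"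
    by (simp add: sum.lessThan_Suc_shift del: sum.lessThan_Suc)
  then show ?case using Cons by (simp add: hamming_weight_Cons)
qed

lemma hamming_weight_card: "hamming_weight x = card {k. k < length x \<and> x ! k}"
  unfolding hamming_weight_def using length_filter_conv_card[of id x] by simp

lemma card_false_positions: "card {k. k < length x \<and> \<not> x ! k} = length x - hamming_weight x"
proof -
  have "length (filter (\<lambda>b. \<not> id b) x) = length x - hamming_weight x"
    using sum_length_filter_compl[of id x] unfolding hamming_weight_def by simp
  then show ?thesis using length_filter_conv_card[of "\<lambda>b. \<not> id b" x] by simp
qed

lemma card_1_witness:
  assumes "card {k. k < N \<and> P k} = 1"
  shows "\<exists>k0<N. \<forall>k<N. P k \<longleftrightarrow> k = k0"
proof -
  obtain k0 where "{k. k < N \<and> P k} = {k0}" using assms card_1_singleton_iff[of "{k. k < N \<and> P k}"] by auto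
  then show ?thesis by (metis (mono_tags, lifting) insertI1 mem_Collect_eq singletonD)
qed

section \<open>Encoding of the basis\<close>

lemma sum_lessThan_mult: "(\<Sum>k<a*b. g k) = (\<Sum>q<a. \<Sum>r<b. g (q*b + r))" for g :: "nat \<Rightarrow> 'a::comm_monoid_add"
proof -
  have "(\<Sum>k<a*b. g k) = (\<Sum>q<a. sum g {q*b..<q*b+b})" by (rule sum.nat_group[symmetric])
  also have "\<dots> = (\<Sum>q<a. \<Sum>r<b. g (q*b + r))"
  proof (rule sum.cong[OF refl])
    fix q
    have "sum g {q*b..<q*b+b} = sum g {0+q*b..<b+q*b}" by (simp add: add.commute)
    also have "\<dots> = (\<Sum>r\<in>{0..<b}. g (r + q*b))" by (rule sum.shift_bounds_nat_ivl)
    also have "\<dots> = (\<Sum>r<b. g (q*b + r))" by (simp add: atLeast0LessThan add.commute)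
    finally show "sum g {q*b..<q*b+b} = (\<Sum>r<b. g (q*b + r))" .
  qed
  finally show ?thesis .
qed

lemma mult_add_div_mod:
  fixes x c d :: nat assumes "c < d"
  shows "(x * d + c) div d = x" "(x * d + c) mod d = c"
  using assms by simp_all

lemma div_div_less:
  fixes x d :: nat assumes "x < d * d * d"
  shows "x div d div d < d"
proof -
  have "x div d div d = x div (d * d)" by (simp add: div_mult2_eq)
  also have "\<dots> < d" using assms by (simp add: less_mult_imp_div_less mult.commute)
  finally show ?thesis .
qed

lemma sum_lessThan_2: "(\<Sum>ob<(2::nat). g ob) = g 0 + g 1"
  by (simp add: numeral_2_eq_2)

lemma sum_if_const: "(\<Sum>x\<in>A. if P then f x else 0) = (if P then (\<Sum>x\<in>A. f x) else 0)"
  by (cases P) simp_all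

lemma sum_lessThan_restrict:
  fixes N :: nat
  assumes "S \<subseteq> {..<N}"
  shows "(\<Sum>x<N. if x \<in> S then g x else 0) = sum g S"
proof -
  have "sum g S = sum g ({..<N} \<inter> S)" using assms by (simp add: Int_absorb1)
  also have "\<dots> = (\<Sum>x<N. if x \<in> S then g x else 0)" by (rule sum.inter_restrict) simp
  finally show ?thesis ..
qed

lemma if_conj_eq: "(if A \<and> B \<and> C then x else 0) = (if A then if B then if C then x else 0 else 0 else 0)"
  by simp

text \<open>Sums over {..<Suc n} must stay folded: keep the simplifier from unrolling them.\<close>
declare sum.lessThan_Suc[simp del]

text \<open>The workspace holds three registers a, b, c with values below n+1, so it has dimension
  (n+1)^3.  The basis vector |i,a,b,c,o> of the whole space has index idx i a b c o, and
  idx_in, idx_a, idx_b, idx_c, idx_out decode an index.\<close>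

locale encoding = fixes n :: nat
begin

abbreviation "n1 \<equiv> Suc n"
definition "wdim = n1 * n1 * n1"
definition "Nq = qdim n wdim"
definition idx :: "nat \<Rightarrow> nat \<Rightarrow> nat \<Rightarrow> nat \<Rightarrow> nat \<Rightarrow> nat" where
  "idx i a b c ob = (i * wdim + ((a * n1 + b) * n1 + c)) * 2 + ob"

definition "idx_in k = in_index wdim k"
definition "idx_out k = out_bit k"
definition "idx_a k = (k div 2) mod wdim div n1 div n1"
definition "idx_b k = (k div 2) mod wdim div n1 mod n1"
definition "idx_c k = (k div 2) mod wdim mod n1"

lemma Nq_eq: "Nq = (n1 * wdim) * 2" unfolding Nq_def qdim_def by simp

lemma wdim_pos: "0 < wdim" unfolding wdim_def by simp

lemma Nq_pos: "0 < Nq" unfolding Nq_eq wdim_def by simp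

lemma sum_over_labels:
  "(\<Sum>k<Nq. g k) = (\<Sum>i<n1. \<Sum>a<n1. \<Sum>b<n1. \<Sum>c<n1. \<Sum>ob<2. g (idx i a b c ob))"
proof -
  have "(\<Sum>k<Nq. g k) = (\<Sum>t<n1*wdim. \<Sum>ob<2. g (t*2 + ob))" unfolding Nq_eq by (rule sum_lessThan_mult)
  also have "\<dots> = (\<Sum>i<n1. \<Sum>w<wdim. \<Sum>ob<2. g ((i*wdim + w)*2 + ob))" by (rule sum_lessThan_mult)
  also have "\<dots> = (\<Sum>i<n1. \<Sum>t<n1*n1. \<Sum>c<n1. \<Sum>ob<2. g ((i*wdim + (t*n1 + c))*2 + ob))"
    unfolding wdim_def by (subst sum_lessThan_mult) (rule refl)
  also have "\<dots> = (\<Sum>i<n1. \<Sum>a<n1. \<Sum>b<n1. \<Sum>c<n1. \<Sum>ob<2. g ((i*wdim + ((a*n1 + b)*n1 + c))*2 + ob))"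
    by (subst sum_lessThan_mult) (rule refl)
  finally show ?thesis unfolding idx_def .
qed

lemma work_idx_less: "a < n1 \<Longrightarrow> b < n1 \<Longrightarrow> c < n1 \<Longrightarrow> (a * n1 + b) * n1 + c < wdim"
proof -
  assume a: "a < n1" and b: "b < n1" and c: "c < n1"
  have "a * n1 + b < n1 * n1"
  proof -
    have "a * n1 + b < a * n1 + n1" using b by simp
    also have "\<dots> = (a+1) * n1" by simp
    also have "\<dots> \<le> n1 * n1" using a by (intro mult_right_mono) auto
    finally show ?thesis .
  qed
  then have "a * n1 + b + 1 \<le> n1 * n1" by simp
  then have "(a * n1 + b + 1) * n1 \<le> n1 * n1 * n1" by (intro mult_right_mono) auto
  then show ?thesis using c unfolding wdim_def by (simp add: algebra_simps)
qed

lemma idx_less: "i < n1 \<Longrightarrow> a < n1 \<Longrightarrow> b < n1 \<Longrightarrow> c < n1 \<Longrightarrow> ob < 2 \<Longrightarrow> idx i a b c ob < Nq"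
proof -
  assume i: "i < n1" and abc: "a < n1" "b < n1" "c < n1" and ob: "ob < 2"
  have w: "(a * n1 + b) * n1 + c < wdim" using work_idx_less abc by blast
  have "i * wdim + ((a * n1 + b) * n1 + c) < (i+1) * wdim" using w by simp
  also have "\<dots> \<le> n1 * wdim" using i by (intro mult_right_mono) auto
  finally have "i * wdim + ((a * n1 + b) * n1 + c) + 1 \<le> n1 * wdim" by simp
  then have "(i * wdim + ((a * n1 + b) * n1 + c) + 1) * 2 \<le> n1 * wdim * 2" by simp
  then show ?thesis using ob unfolding idx_def Nq_eq by simp
qed

lemma idx_decode:
  assumes "i < n1" "a < n1" "b < n1" "c < n1" "ob < 2"
  shows "idx_in (idx i a b c ob) = i" "idx_a (idx i a b c ob) = a" "idx_b (idx i a b c ob) = b"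
    "idx_c (idx i a b c ob) = c" "idx_out (idx i a b c ob) = ob"
proof -
  define w where "w = (a * n1 + b) * n1 + c"
  have w: "w < wdim" using work_idx_less assms unfolding w_def by blast
  have d2: "idx i a b c ob div 2 = i * wdim + w" unfolding idx_def w_def using assms by simp
  have "idx i a b c ob div (2 * wdim) = (idx i a b c ob div 2) div wdim" by (simp add: div_mult2_eq)
  also have "\<dots> = i" unfolding d2 using w wdim_pos by simp
  finally show "idx_in (idx i a b c ob) = i" unfolding idx_in_def in_index_def .
  have wm: "(idx i a b c ob div 2) mod wdim = w" unfolding d2 using w by simp
  have "w div n1 = a * n1 + b" unfolding w_def using assms(4) by (rule mult_add_div_mod)
  then show "idx_a (idx i a b c ob) = a" "idx_b (idx i a b c ob) = b" unfolding idx_a_def idx_b_def wm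
    using mult_add_div_mod[OF assms(3), of a] by simp_all
  show "idx_c (idx i a b c ob) = c" unfolding idx_c_def wm w_def using mult_add_div_mod(2)[OF assms(4)] by simp
  show "idx_out (idx i a b c ob) = ob" unfolding idx_out_def out_bit_def idx_def by (rule mult_add_div_mod(2)[OF assms(5)])
qed

lemma idx_encode:
  assumes "k < Nq"
  shows "k = idx (idx_in k) (idx_a k) (idx_b k) (idx_c k) (idx_out k)" "idx_in k < n1" "idx_a k < n1" "idx_b k < n1" "idx_c k < n1" "idx_out k < 2"
proof -
  have "idx_in k < n1"
  proof -
    have "k < (n1 * wdim) * 2" using assms Nq_eq by simp
    then have "k div 2 < n1 * wdim" by simp
    then show ?thesis unfolding idx_in_def in_index_def
      by (simp add: div_mult2_eq less_mult_imp_div_less)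
  qed
  then show "idx_in k < n1" .
  have wl: "(k div 2) mod wdim < wdim" using wdim_pos by simp
  show "idx_a k < n1" unfolding idx_a_def using wl unfolding wdim_def by (rule div_div_less)
  show "idx_b k < n1" "idx_c k < n1" "idx_out k < 2" unfolding idx_b_def idx_c_def idx_out_def out_bit_def by simp_all
  have "k = (k div 2) * 2 + k mod 2" by simp
  also have "k div 2 = (k div 2) div wdim * wdim + (k div 2) mod wdim" by simp
  also have "(k div 2) div wdim = idx_in k" unfolding idx_in_def in_index_def by (simp add: div_mult2_eq)
  also have "(k div 2) mod wdim = ((k div 2) mod wdim div n1) * n1 + (k div 2) mod wdim mod n1" by (rule div_mult_mod_eq[symmetric])
  also have "(k div 2) mod wdim div n1 = idx_a k * n1 + idx_b k" unfolding idx_a_def idx_b_def by (rule div_mult_mod_eq[symmetric])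
  finally show "k = idx (idx_in k) (idx_a k) (idx_b k) (idx_c k) (idx_out k)"
    unfolding idx_def idx_c_def idx_out_def out_bit_def by (simp add: mult.commute)
qed

definition lvec :: "(nat \<Rightarrow> nat \<Rightarrow> nat \<Rightarrow> nat \<Rightarrow> nat \<Rightarrow> real) \<Rightarrow> nat \<Rightarrow> real" where
  "lvec L k = (if k < Nq then L (idx_in k) (idx_a k) (idx_b k) (idx_c k) (idx_out k) else 0)"

lemma lvec_idx: "i < n1 \<Longrightarrow> a < n1 \<Longrightarrow> b < n1 \<Longrightarrow> c < n1 \<Longrightarrow> ob < 2 \<Longrightarrow> lvec L (idx i a b c ob) = L i a b c ob"
  unfolding lvec_def using idx_less idx_decode by simp

definition lsum :: "(nat \<Rightarrow> nat \<Rightarrow> nat \<Rightarrow> nat \<Rightarrow> nat \<Rightarrow> real) \<Rightarrow> real" where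
  "lsum L = (\<Sum>i<n1. \<Sum>a<n1. \<Sum>b<n1. \<Sum>c<n1. \<Sum>ob<2. L i a b c ob)"

lemma dotp_lvec: "dotp Nq (lvec L1) (lvec L2) = lsum (\<lambda>i a b c ob. L1 i a b c ob * L2 i a b c ob)"
  unfolding dotp_def sum_over_labels lsum_def by (intro sum.cong refl) (simp add: lvec_idx)

lemma dotp_lvec_left: "dotp Nq (lvec L1) v = lsum (\<lambda>i a b c ob. L1 i a b c ob * v (idx i a b c ob))"
  unfolding dotp_def sum_over_labels lsum_def by (intro sum.cong refl) (simp add: lvec_idx)

lemma lvec_eqI:
  assumes "\<And>k. \<not> k < Nq \<Longrightarrow> V k = 0"
    and "\<And>i a b c ob. i < n1 \<Longrightarrow> a < n1 \<Longrightarrow> b < n1 \<Longrightarrow> c < n1 \<Longrightarrow> ob < 2 \<Longrightarrow> V (idx i a b c ob) = L i a b c ob"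
  shows "V = lvec L"
proof (rule ext)
  fix k
  show "V k = lvec L k"
  proof (cases "k < Nq")
    case True
    then show ?thesis using idx_encode[OF True] assms(2)[of "idx_in k" "idx_a k" "idx_b k" "idx_c k" "idx_out k"]
      unfolding lvec_def by simp
  qed (simp add: assms(1) lvec_def)
qed

definition ssum :: "(nat \<Rightarrow> nat \<Rightarrow> nat \<Rightarrow> nat \<Rightarrow> real) \<Rightarrow> real" where
  "ssum B = (\<Sum>i<n1. \<Sum>a<n1. \<Sum>b<n1. \<Sum>c<n1. B i a b c)"

lemma lsum_ssum: "lsum L = ssum (\<lambda>i a b c. L i a b c 0 + L i a b c 1)"
  unfolding lsum_def ssum_def sum_lessThan_2 ..

lemma ssum_reorder: "ssum B = (\<Sum>b<n1. \<Sum>c<n1. \<Sum>a<n1. \<Sum>i<n1. B i a b c)"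
proof -
  have "ssum B = (\<Sum>a<n1. \<Sum>i<n1. \<Sum>b<n1. \<Sum>c<n1. B i a b c)"
    unfolding ssum_def by (rule sum.swap)
  also have "\<dots> = (\<Sum>a<n1. \<Sum>b<n1. \<Sum>i<n1. \<Sum>c<n1. B i a b c)"
    by (rule sum.cong[OF refl], rule sum.swap)
  also have "\<dots> = (\<Sum>a<n1. \<Sum>b<n1. \<Sum>c<n1. \<Sum>i<n1. B i a b c)"
    by (rule sum.cong[OF refl], rule sum.cong[OF refl], rule sum.swap)
  also have "\<dots> = (\<Sum>b<n1. \<Sum>a<n1. \<Sum>c<n1. \<Sum>i<n1. B i a b c)"
    by (rule sum.swap)
  also have "\<dots> = (\<Sum>b<n1. \<Sum>c<n1. \<Sum>a<n1. \<Sum>i<n1. B i a b c)"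
    by (rule sum.cong[OF refl], rule sum.swap)
  finally show ?thesis .
qed

lemma ssum_cmult: "ssum (\<lambda>i a b c. x * B i a b c) = x * ssum B"
  unfolding ssum_def by (simp add: sum_distrib_left)

lemma ssum_sum: "ssum (\<lambda>i a b c. \<Sum>u\<in>U. f u i a b c) = (\<Sum>u\<in>U. ssum (f u))"
  unfolding ssum_def by (simp add: sum.swap[of _ U])

lemma lsum_point:
  assumes "i0 < n1" "a0 < n1" "b0 < n1" "c0 < n1" "o0 < 2"
  shows "lsum (\<lambda>i a b c ob. if i = i0 \<and> a = a0 \<and> b = b0 \<and> c = c0 \<and> ob = o0 then x else 0) = x"
proof -
  have e: "(if i = i0 \<and> a = a0 \<and> b = b0 \<and> c = c0 \<and> ob = o0 then x else 0)
     = (if i = i0 then (if a = a0 then (if b = b0 then (if c = c0 then (if ob = o0 then x else 0) else 0) else 0) else 0) else 0)"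
    for i a b c ob by simp
  show ?thesis unfolding lsum_def e using assms by (simp add: sum_if_const)
qed

lemma lsum_add: "lsum (\<lambda>i a b c ob. L1 i a b c ob + L2 i a b c ob) = lsum L1 + lsum L2"
  unfolding lsum_def by (simp add: sum.distrib)

lemma lsum_cmult: "lsum (\<lambda>i a b c ob. x * L i a b c ob) = x * lsum L"
  unfolding lsum_def by (simp add: sum_distrib_left)

end

definition tri :: "real \<Rightarrow> real \<Rightarrow> real \<Rightarrow> nat \<Rightarrow> nat \<Rightarrow> nat \<Rightarrow> nat \<Rightarrow> real" where
  "tri x1 x2 x3 a b c i = (if i = a then x1 else 0) + (if i = b then x2 else 0) + (if i = c then x3 else 0)"

lemma tri_inner:
  assumes "a < N" "b < N" "c < N" "a \<noteq> b" "a \<noteq> c" "b \<noteq> c"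
  shows "(\<Sum>i<N. tri x1 x2 x3 a b c i * tri y1 y2 y3 a b c i) = x1 * y1 + x2 * y2 + x3 * y3"
proof -
  have "tri x1 x2 x3 a b c i * tri y1 y2 y3 a b c i
     = (if i = a then x1 * y1 else 0) + (if i = b then x2 * y2 else 0) + (if i = c then x3 * y3 else 0)" for i
    unfolding tri_def using assms by auto
  then show ?thesis using assms by (simp add: sum.distrib)
qed

section \<open>The construction\<close>

text \<open>Amplitudes of the state prepared by the first unitary: ampB on register b, ampC on
  register c, and the normalisation normT over the n(n-1)(n-2) triples.\<close>

locale construction = encoding + assumes n_ge: "4 \<le> n"
begin

definition "ampB = 1 / sqrt (real n)"
definition "ampC = sqrt (real n - 1) / sqrt (real n)"
definition "normT = 1 / sqrt (real n * (real n - 1) * (real n - 2))"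

lemma n_ge_4: "(4::real) \<le> real n" using n_ge by simp

lemma real_n_minus: "real (n - 2) = real n - 2" "real (n - 1) = real n - 1" using n_ge by auto

lemma ampB_sq: "ampB^2 = 1 / real n" unfolding ampB_def using n_ge_4 by (simp add: power_divide)
lemma ampC_sq: "ampC^2 = (real n - 1) / real n" unfolding ampC_def using n_ge_4 by (simp add: power_divide)
lemma amp_sq_sum: "ampB^2 + ampC^2 = 1" unfolding ampB_sq ampC_sq using n_ge_4 by (simp add: field_simps)
lemma normT_sq: "normT^2 * (real n * (real n - 1) * (real n - 2)) = 1"
  unfolding normT_def using n_ge_4 by (simp add: power_divide)
lemma ampB_less_1: "ampB < 1"
proof -
  have "1 < sqrt (real n)" using n_ge_4 by simp
  then show ?thesis unfolding ampB_def by simp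
qed

definition triple :: "nat \<Rightarrow> nat \<Rightarrow> nat \<Rightarrow> bool" where
  "triple a b c \<longleftrightarrow> 1 \<le> a \<and> a \<le> n \<and> 1 \<le> b \<and> b \<le> n \<and> 1 \<le> c \<and> c \<le> n \<and> a \<noteq> b \<and> a \<noteq> c \<and> b \<noteq> c"

abbreviation "Dom \<equiv> {1..n}"

lemma triple_iff: "triple a b c \<longleftrightarrow> b \<in> Dom \<and> c \<in> Dom - {b} \<and> a \<in> Dom - {b, c}"
  unfolding triple_def by auto

lemma triple_distinct: "triple a b c \<Longrightarrow> a < n1 \<and> b < n1 \<and> c < n1 \<and> a \<noteq> b \<and> a \<noteq> c \<and> b \<noteq> c"
  unfolding triple_def by simp

lemma ssum_triples:
  "ssum (\<lambda>i a b c. if triple a b c then P i a b c else 0)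
   = (\<Sum>b\<in>Dom. \<Sum>c\<in>Dom-{b}. \<Sum>a\<in>Dom-{b,c}. \<Sum>i<n1. P i a b c)"
proof -
  have sub: "Dom \<subseteq> {..<n1}" "Dom - {b} \<subseteq> {..<n1}" "Dom - {b, c} \<subseteq> {..<n1}" for b c by auto
  have "(\<Sum>i<n1. if triple a b c then P i a b c else 0)
      = (if b \<in> Dom then if c \<in> Dom - {b} then if a \<in> Dom - {b, c} then (\<Sum>i<n1. P i a b c)
         else 0 else 0 else 0)" for a b c
    unfolding sum_if_const triple_iff by (simp only: if_conj_eq)
  then have "ssum (\<lambda>i a b c. if triple a b c then P i a b c else 0)
      = (\<Sum>b<n1. if b \<in> Dom then \<Sum>c<n1. if c \<in> Dom - {b} then
           \<Sum>a<n1. if a \<in> Dom - {b, c} then (\<Sum>i<n1. P i a b c) else 0 else 0 else 0)"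
    unfolding ssum_reorder by (simp only: sum_if_const)
  then show ?thesis
    by (simp only: sum_lessThan_restrict[OF sub(1)] sum_lessThan_restrict[OF sub(2)]
        sum_lessThan_restrict[OF sub(3)])
qed

lemma card_Dom_minus2: "b \<in> Dom \<Longrightarrow> c \<in> Dom \<Longrightarrow> b \<noteq> c \<Longrightarrow> card (Dom - {b,c}) = n - 2"
  by (subst card_Diff_subset) auto

lemma sum_a_const: "b \<in> Dom \<Longrightarrow> c \<in> Dom - {b} \<Longrightarrow> (\<Sum>a\<in>Dom-{b,c}. (h::real)) = (real n - 2) * h"
  by (simp add: card_Dom_minus2 real_n_minus)

lemma count_triples: "(\<Sum>b\<in>Dom. \<Sum>c\<in>Dom-{b}. \<Sum>a\<in>Dom-{b,c}. (1::real)) = real n * (real n - 1) * (real n - 2)"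
proof -
  have "(\<Sum>b\<in>Dom. \<Sum>c\<in>Dom-{b}. \<Sum>a\<in>Dom-{b,c}. (1::real)) = (\<Sum>b\<in>Dom. \<Sum>c\<in>Dom-{b}. real n - 2)"
    by (intro sum.cong refl) (simp add: card_Dom_minus2 real_n_minus)
  also have "\<dots> = (\<Sum>b\<in>Dom. (real n - 1) * (real n - 2))" by (intro sum.cong refl) (simp add: real_n_minus)
  also have "\<dots> = real n * ((real n - 1) * (real n - 2))" by simp
  finally show ?thesis by simp
qed

text \<open>Branch vectors.  Inside branch (a,b,c) the input register carries
  x1|a> + x2|b> + x3|c>; bamp collects these amplitudes over all triples and bvec puts
  them on output bit 1.\<close>

definition bamp :: "(nat \<Rightarrow> nat \<Rightarrow> nat \<Rightarrow> real) \<Rightarrow> (nat \<Rightarrow> nat \<Rightarrow> nat \<Rightarrow> real) \<Rightarrow> (nat \<Rightarrow> nat \<Rightarrow> nat \<Rightarrow> real)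
   \<Rightarrow> nat \<Rightarrow> nat \<Rightarrow> nat \<Rightarrow> nat \<Rightarrow> real" where
  "bamp X1 X2 X3 i a b c = (if triple a b c then tri (X1 a b c) (X2 a b c) (X3 a b c) a b c i else 0)"

definition bvec :: "(nat \<Rightarrow> nat \<Rightarrow> nat \<Rightarrow> real) \<Rightarrow> (nat \<Rightarrow> nat \<Rightarrow> nat \<Rightarrow> real) \<Rightarrow> (nat \<Rightarrow> nat \<Rightarrow> nat \<Rightarrow> real)
   \<Rightarrow> nat \<Rightarrow> nat \<Rightarrow> nat \<Rightarrow> nat \<Rightarrow> nat \<Rightarrow> real" where
  "bvec X1 X2 X3 i a b c ob = (if ob = 1 then bamp X1 X2 X3 i a b c else 0)"

lemma bvec_cong:
  "(\<And>a b c. X1 a b c = Y1 a b c) \<Longrightarrow> (\<And>a b c. X2 a b c = Y2 a b c) \<Longrightarrow> (\<And>a b c. X3 a b c = Y3 a b c)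
   \<Longrightarrow> bvec X1 X2 X3 = bvec Y1 Y2 Y3"
  by (metis ext)

lemma ssum_bamp: "ssum (\<lambda>i a b c. bamp X1 X2 X3 i a b c * bamp Y1 Y2 Y3 i a b c)
  = (\<Sum>b\<in>Dom. \<Sum>c\<in>Dom-{b}. \<Sum>a\<in>Dom-{b,c}. X1 a b c * Y1 a b c + X2 a b c * Y2 a b c + X3 a b c * Y3 a b c)"
proof -
  have e: "bamp X1 X2 X3 i a b c * bamp Y1 Y2 Y3 i a b c = (if triple a b c then tri (X1 a b c) (X2 a b c) (X3 a b c) a b c i * tri (Y1 a b c) (Y2 a b c) (Y3 a b c) a b c i else 0)" for i a b c
    unfolding bamp_def by simp
  show ?thesis unfolding e ssum_triples
  proof (intro sum.cong refl)
    fix b c a assume "b \<in> Dom" "c \<in> Dom - {b}" "a \<in> Dom - {b, c}"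
    then have "triple a b c" by (simp add: triple_iff)
    then have d: "a < n1" "b < n1" "c < n1" "a \<noteq> b" "a \<noteq> c" "b \<noteq> c" using triple_distinct by auto
    show "(\<Sum>i<n1. tri (X1 a b c) (X2 a b c) (X3 a b c) a b c i * tri (Y1 a b c) (Y2 a b c) (Y3 a b c) a b c i)
      = X1 a b c * Y1 a b c + X2 a b c * Y2 a b c + X3 a b c * Y3 a b c" by (rule tri_inner[OF d])
  qed
qed

definition zsign :: "bool list \<Rightarrow> nat \<Rightarrow> real" where "zsign x i = (if xbit x i then -1 else 1)"

definition query_r :: "bool list \<Rightarrow> (nat \<Rightarrow> real) \<Rightarrow> nat \<Rightarrow> real" where
  "query_r x v k = (if k < Nq then (if xbit x (in_index wdim k) then - v k else v k) else 0)"

lemma zsign_sq: "zsign x i * zsign x i = 1" unfolding zsign_def by simp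

lemma query_bvec:
  "query_r x (lvec (bvec X1 X2 X3)) = lvec (bvec (\<lambda>a b c. zsign x a * X1 a b c) (\<lambda>a b c. zsign x b * X2 a b c) (\<lambda>a b c. zsign x c * X3 a b c))"
proof (rule lvec_eqI)
  show "\<And>k. \<not> k < Nq \<Longrightarrow> query_r x (lvec (bvec X1 X2 X3)) k = 0" unfolding query_r_def by simp
  fix i a b c ob :: nat
  assume r: "i < n1" "a < n1" "b < n1" "c < n1" "ob < 2"
  have "in_index wdim (idx i a b c ob) = i" using idx_decode(1)[OF r] unfolding idx_in_def .
  then show "query_r x (lvec (bvec X1 X2 X3)) (idx i a b c ob) = bvec (\<lambda>a b c. zsign x a * X1 a b c) (\<lambda>a b c. zsign x b * X2 a b c) (\<lambda>a b c. zsign x c * X3 a b c) i a b c ob"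
    unfolding query_r_def using idx_less[OF r] lvec_idx[OF r] unfolding bvec_def bamp_def tri_def zsign_def by auto
qed

lemma query_r_norm: "(\<Sum>k<Nq. (query_r x v k)^2) = (\<Sum>k<Nq. (v k)^2)"
  unfolding query_r_def by (intro sum.cong refl) simp

subsection \<open>The first unitary\<close>

text \<open>U_init is the reflection about (e0 - phi)/sqrt 2, which maps the initial basis vector e0
  to phi = normT * SUM_T (ampB|b> + ampC|c>)|T>|1>.\<close>

definition init_r :: "nat \<Rightarrow> real" where "init_r k = (if k = 0 then 1 else 0)"

definition e0_lbl :: "nat \<Rightarrow> nat \<Rightarrow> nat \<Rightarrow> nat \<Rightarrow> nat \<Rightarrow> real" where
  "e0_lbl i a b c ob = (if i = 0 \<and> a = 0 \<and> b = 0 \<and> c = 0 \<and> ob = 0 then 1 else 0)"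

definition phi_lbl :: "nat \<Rightarrow> nat \<Rightarrow> nat \<Rightarrow> nat \<Rightarrow> nat \<Rightarrow> real" where
  "phi_lbl = bvec (\<lambda>_ _ _. 0) (\<lambda>_ _ _. normT * ampB) (\<lambda>_ _ _. normT * ampC)"

definition u0_axis :: "nat \<Rightarrow> nat \<Rightarrow> nat \<Rightarrow> nat \<Rightarrow> nat \<Rightarrow> real" where
  "u0_axis i a b c ob = (e0_lbl i a b c ob - phi_lbl i a b c ob) / sqrt 2"

definition "U_init = reflection {0::nat} (\<lambda>_. lvec u0_axis) (\<lambda>_ _. 1)"

lemma init_r_vec: "init_r = lvec e0_lbl"
proof (rule lvec_eqI)
  show "\<And>k. \<not> k < Nq \<Longrightarrow> init_r k = 0" using Nq_pos unfolding init_r_def by auto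
  fix i a b c ob :: nat
  assume "i < n1" "a < n1" "b < n1" "c < n1" "ob < 2"
  show "init_r (idx i a b c ob) = e0_lbl i a b c ob"
    unfolding init_r_def e0_lbl_def idx_def using wdim_pos by auto
qed

lemma init_r_norm: "(\<Sum>k<Nq. (init_r k)^2) = 1"
proof -
  have "(\<Sum>k<Nq. (init_r k)^2) = (\<Sum>k<Nq. if k = 0 then 1 else 0)" unfolding init_r_def by (intro sum.cong refl) simp
  then show ?thesis using Nq_pos by simp
qed

text \<open>e0 and phi are orthogonal unit vectors, so (e0 - phi)/sqrt 2 is a unit axis.\<close>
lemma e0_phi_orth: "e0_lbl i a b c ob * phi_lbl i a b c ob = 0"
  unfolding e0_lbl_def phi_lbl_def bvec_def bamp_def triple_def by auto

lemma e0_norm: "lsum (\<lambda>i a b c ob. e0_lbl i a b c ob * e0_lbl i a b c ob) = 1"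
proof -
  have "(\<lambda>i a b c ob. e0_lbl i a b c ob * e0_lbl i a b c ob) = e0_lbl"
    unfolding e0_lbl_def by (intro ext) simp
  moreover have "lsum e0_lbl = 1" unfolding e0_lbl_def by (rule lsum_point) simp_all
  ultimately show ?thesis by simp
qed

lemma phi_norm: "lsum (\<lambda>i a b c ob. phi_lbl i a b c ob * phi_lbl i a b c ob) = 1"
proof -
  have "lsum (\<lambda>i a b c ob. phi_lbl i a b c ob * phi_lbl i a b c ob)
      = ssum (\<lambda>i a b c. bamp (\<lambda>_ _ _. 0) (\<lambda>_ _ _. normT * ampB) (\<lambda>_ _ _. normT * ampC) i a b c
                        * bamp (\<lambda>_ _ _. 0) (\<lambda>_ _ _. normT * ampB) (\<lambda>_ _ _. normT * ampC) i a b c)"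
    unfolding lsum_ssum phi_lbl_def bvec_def by simp
  also have "\<dots> = (\<Sum>b\<in>Dom. \<Sum>c\<in>Dom-{b}. \<Sum>a\<in>Dom-{b,c}. normT^2 * (ampB^2 + ampC^2))"
    unfolding ssum_bamp by (simp add: power2_eq_square algebra_simps)
  also have "\<dots> = normT^2 * (real n * (real n - 1) * (real n - 2))"
    unfolding amp_sq_sum using count_triples by (simp add: sum_distrib_left[symmetric])
  also have "\<dots> = 1" by (rule normT_sq)
  finally show ?thesis .
qed

lemma u0_axis_norm: "dotp Nq (lvec u0_axis) (lvec u0_axis) = 1"
proof -
  have "(\<lambda>i a b c ob. u0_axis i a b c ob * u0_axis i a b c ob)
     = (\<lambda>i a b c ob. (1/2) * (e0_lbl i a b c ob * e0_lbl i a b c ob) + (1/2) * (phi_lbl i a b c ob * phi_lbl i a b c ob))"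
    unfolding u0_axis_def using e0_phi_orth by (intro ext) (simp add: field_simps power2_eq_square)
  then show ?thesis unfolding dotp_lvec by (simp only: lsum_add lsum_cmult e0_norm phi_norm)
qed

lemma u0_axis_e0: "dotp Nq (lvec u0_axis) (lvec e0_lbl) = 1 / sqrt 2"
proof -
  have "(\<lambda>i a b c ob. u0_axis i a b c ob * e0_lbl i a b c ob)
     = (\<lambda>i a b c ob. (1 / sqrt 2) * (e0_lbl i a b c ob * e0_lbl i a b c ob))"
    unfolding u0_axis_def using e0_phi_orth by (intro ext) (simp add: field_simps)
  then show ?thesis unfolding dotp_lvec by (simp only: lsum_cmult e0_norm)
qed

lemma U_init_orthogonal: "orth_mat Nq U_init"
  unfolding U_init_def by (rule reflection_orthogonal) (simp_all add: u0_axis_norm)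

lemma U_init_apply: "mvec Nq U_init init_r = lvec phi_lbl"
proof (rule lvec_eqI)
  show "\<And>k. \<not> k < Nq \<Longrightarrow> mvec Nq U_init init_r k = 0" unfolding mvec_def by simp
  fix i a b c ob :: nat
  assume r: "i < n1" "a < n1" "b < n1" "c < n1" "ob < 2"
  have "mvec Nq U_init init_r (idx i a b c ob)
      = init_r (idx i a b c ob) - 2 * (lvec u0_axis (idx i a b c ob) * dotp Nq (lvec u0_axis) init_r)"
    unfolding U_init_def reflection_apply[OF idx_less[OF r]] by simp
  also have "\<dots> = e0_lbl i a b c ob - 2 * (u0_axis i a b c ob * (1 / sqrt 2))"
    unfolding init_r_vec lvec_idx[OF r] u0_axis_e0 ..
  also have "\<dots> = phi_lbl i a b c ob" unfolding u0_axis_def by (simp add: field_simps)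
  finally show "mvec Nq U_init init_r (idx i a b c ob) = phi_lbl i a b c ob" .
qed

subsection \<open>The second unitary\<close>

text \<open>branch_refl g1 g2 g3 reflects, in every branch T = (a,b,c) on output bit 1, about the
  vector g1|a> + g2|b> + g3|c>; the axes of different branches are orthonormal.\<close>

definition "Triples = {(a, b, c). triple a b c}"

lemma finite_Triples: "finite Triples"
proof -
  have "Triples \<subseteq> {..<n1} \<times> {..<n1} \<times> {..<n1}" unfolding Triples_def triple_def by auto
  then show ?thesis by (rule finite_subset) simp
qed

definition axis_vec :: "real \<Rightarrow> real \<Rightarrow> real \<Rightarrow> nat \<times> nat \<times> nat \<Rightarrow> nat \<Rightarrow> nat \<Rightarrow> nat \<Rightarrow> nat \<Rightarrow> nat \<Rightarrow> real" where
  "axis_vec g1 g2 g3 T i a b c ob = (if (a, b, c) = T \<and> ob = 1 then tri g1 g2 g3 a b c i else 0)"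

definition "branch_refl g1 g2 g3 =
  reflection Triples (\<lambda>T. lvec (axis_vec g1 g2 g3 T)) (\<lambda>T T'. if T = T' then 1 else 0)"

lemma sum_diagonal:
  assumes "finite K"
  shows "(\<Sum>k\<in>K. \<Sum>l\<in>K. F k * (if k = l then 1 else 0) * G l) = (\<Sum>k\<in>K. F k * (G k :: real))"
proof -
  have "F k * (if k = l then 1 else 0) * G l = (if k = l then F k * G k else 0)" for k l by simp
  then show ?thesis using assms by simp
qed

lemma dotp_axis_vec:
  assumes "triple a b c"
  shows "dotp Nq (lvec (axis_vec g1 g2 g3 (a, b, c))) v = (\<Sum>i<n1. tri g1 g2 g3 a b c i * v (idx i a b c 1))"
proof -
  have r: "a < n1" "b < n1" "c < n1" using assms triple_distinct by auto
  have e: "axis_vec g1 g2 g3 (a, b, c) i a' b' c' ob * v (idx i a' b' c' ob)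
     = (if a' = a then (if b' = b then (if c' = c then (if ob = 1 then tri g1 g2 g3 a b c i * v (idx i a b c 1)
         else 0) else 0) else 0) else 0)" for i a' b' c' ob
    unfolding axis_vec_def by auto
  show ?thesis unfolding dotp_lvec_left lsum_def e using r by (simp add: sum_if_const)
qed

lemma axis_vec_orthonormal:
  assumes T: "T \<in> Triples" and T': "T' \<in> Triples" and unit: "g1 * g1 + g2 * g2 + g3 * g3 = 1"
  shows "dotp Nq (lvec (axis_vec g1 g2 g3 T')) (lvec (axis_vec g1 g2 g3 T)) = (if T' = T then 1 else 0)"
proof -
  obtain a b c where T'_eq: "T' = (a, b, c)" and abc: "triple a b c" using T' unfolding Triples_def by auto
  then have d: "a < n1" "b < n1" "c < n1" "a \<noteq> b" "a \<noteq> c" "b \<noteq> c" using triple_distinct by auto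
  have "dotp Nq (lvec (axis_vec g1 g2 g3 T')) (lvec (axis_vec g1 g2 g3 T))
      = (\<Sum>i<n1. tri g1 g2 g3 a b c i * (if T' = T then tri g1 g2 g3 a b c i else 0))"
    unfolding T'_eq dotp_axis_vec[OF abc] using d
    by (intro sum.cong refl) (auto simp: lvec_idx axis_vec_def)
  also have "\<dots> = (if T' = T then 1 else 0)" using tri_inner[OF d] unit by simp
  finally show ?thesis .
qed

lemma branch_refl_orthogonal:
  assumes unit: "g1 * g1 + g2 * g2 + g3 * g3 = 1"
  shows "orth_mat Nq (branch_refl g1 g2 g3)"
  unfolding branch_refl_def
proof (rule reflection_orthogonal)
  fix j r assume j: "j \<in> Triples"
  show "(\<Sum>k\<in>Triples. \<Sum>l\<in>Triples. lvec (axis_vec g1 g2 g3 k) r * (if k = l then 1 else 0)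
          * dotp Nq (lvec (axis_vec g1 g2 g3 l)) (lvec (axis_vec g1 g2 g3 j))) = lvec (axis_vec g1 g2 g3 j) r"
    unfolding sum_diagonal[OF finite_Triples] using j finite_Triples
    by (simp add: axis_vec_orthonormal[OF j _ unit] if_distrib cong: if_cong)
qed simp

lemma branch_refl_apply:
  "mvec Nq (branch_refl g1 g2 g3) (lvec (bvec X1 X2 X3)) = lvec (bvec
     (\<lambda>a b c. X1 a b c - 2 * g1 * (g1 * X1 a b c + g2 * X2 a b c + g3 * X3 a b c))
     (\<lambda>a b c. X2 a b c - 2 * g2 * (g1 * X1 a b c + g2 * X2 a b c + g3 * X3 a b c))
     (\<lambda>a b c. X3 a b c - 2 * g3 * (g1 * X1 a b c + g2 * X2 a b c + g3 * X3 a b c)))"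
  (is "_ = lvec ?R")
proof (rule lvec_eqI)
  let ?V = "lvec (bvec X1 X2 X3)"
  show "\<And>k. \<not> k < Nq \<Longrightarrow> mvec Nq (branch_refl g1 g2 g3) ?V k = 0" unfolding mvec_def by simp
  fix i a b c ob :: nat
  assume r: "i < n1" "a < n1" "b < n1" "c < n1" "ob < 2"
  have component: "(\<Sum>k\<in>Triples. lvec (axis_vec g1 g2 g3 k) (idx i a b c ob) * dotp Nq (lvec (axis_vec g1 g2 g3 k)) ?V)
      = (if triple a b c \<and> ob = 1 then tri g1 g2 g3 a b c i * dotp Nq (lvec (axis_vec g1 g2 g3 (a, b, c))) ?V else 0)"
  proof -
    have "lvec (axis_vec g1 g2 g3 k) (idx i a b c ob) * dotp Nq (lvec (axis_vec g1 g2 g3 k)) ?V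
        = (if k = (a, b, c) then (if ob = 1 then tri g1 g2 g3 a b c i
             * dotp Nq (lvec (axis_vec g1 g2 g3 (a, b, c))) ?V else 0) else 0)" for k
      unfolding lvec_idx[OF r] axis_vec_def by auto
    then show ?thesis using finite_Triples by (simp add: Triples_def)
  qed
  have mv: "mvec Nq (branch_refl g1 g2 g3) ?V (idx i a b c ob)
      = ?V (idx i a b c ob) - 2 * (if triple a b c \<and> ob = 1
          then tri g1 g2 g3 a b c i * dotp Nq (lvec (axis_vec g1 g2 g3 (a, b, c))) ?V else 0)"
    unfolding branch_refl_def reflection_apply[OF idx_less[OF r]] sum_diagonal[OF finite_Triples] component ..
  show "mvec Nq (branch_refl g1 g2 g3) ?V (idx i a b c ob) = ?R i a b c ob"
  proof (cases "triple a b c \<and> ob = 1")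
    case True
    then have d: "a < n1" "b < n1" "c < n1" "a \<noteq> b" "a \<noteq> c" "b \<noteq> c" using triple_distinct by auto
    have "dotp Nq (lvec (axis_vec g1 g2 g3 (a, b, c))) ?V
        = (\<Sum>i'<n1. tri g1 g2 g3 a b c i' * tri (X1 a b c) (X2 a b c) (X3 a b c) a b c i')"
      unfolding dotp_axis_vec[OF conjunct1[OF True]] using d True
      by (intro sum.cong refl) (simp add: lvec_idx bvec_def bamp_def)
    also have "\<dots> = g1 * X1 a b c + g2 * X2 a b c + g3 * X3 a b c" by (rule tri_inner[OF d])
    finally show ?thesis unfolding mv lvec_idx[OF r] bvec_def bamp_def tri_def using True
      by (simp add: algebra_simps)
  next
    case False
    then show ?thesis unfolding mv lvec_idx[OF r] bvec_def bamp_def by auto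
  qed
qed

text \<open>U_mid is the product of two branchwise reflections.  The first sends |b> to
  ampC|a> + ampB|b>, the second maps (ampC y, ampB y, w) to
  (ampC y - ampB w, ampB y + ampC w, 0).\<close>

definition "axis1_len = sqrt (2 - 2 * ampB)"

lemma axis1_len_sq: "axis1_len * axis1_len = 2 - 2 * ampB" unfolding axis1_len_def using ampB_less_1 by simp
lemma axis1_len_pos: "0 < axis1_len" unfolding axis1_len_def using ampB_less_1 by simp

definition "U_mid = mmul Nq (branch_refl (ampB / sqrt 2) (- ampC / sqrt 2) (1 / sqrt 2))
                             (branch_refl (- ampC / axis1_len) ((1 - ampB) / axis1_len) 0)"

lemma U_mid_orthogonal: "orth_mat Nq U_mid"
proof -
  have "(- ampC / axis1_len) * (- ampC / axis1_len) + ((1 - ampB) / axis1_len) * ((1 - ampB) / axis1_len) + 0 * 0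
      = (ampC^2 + 1 - 2 * ampB + ampB^2) / (axis1_len * axis1_len)"
    using axis1_len_pos by (simp add: field_simps power2_eq_square)
  also have "\<dots> = 1" unfolding axis1_len_sq using amp_sq_sum ampB_less_1 by (simp add: field_simps)
  finally have unit1: "(- ampC / axis1_len) * (- ampC / axis1_len) + ((1 - ampB) / axis1_len) * ((1 - ampB) / axis1_len) + 0 * 0 = 1" .
  have "(ampB / sqrt 2) * (ampB / sqrt 2) + (- ampC / sqrt 2) * (- ampC / sqrt 2) + (1 / sqrt 2) * (1 / sqrt 2)
      = (ampB^2 + ampC^2 + 1) / 2" by (simp add: field_simps power2_eq_square)
  then have unit2: "(ampB / sqrt 2) * (ampB / sqrt 2) + (- ampC / sqrt 2) * (- ampC / sqrt 2) + (1 / sqrt 2) * (1 / sqrt 2) = 1"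
    using amp_sq_sum by simp
  show ?thesis unfolding U_mid_def by (intro orthogonal_mmul branch_refl_orthogonal unit1 unit2)
qed

lemma U_mid_apply:
  "mvec Nq U_mid (lvec (bvec (\<lambda>_ _ _. 0) Y W))
   = lvec (bvec (\<lambda>a b c. ampC * Y a b c - ampB * W a b c) (\<lambda>a b c. ampB * Y a b c + ampC * W a b c) (\<lambda>_ _ _. 0))"
proof -
  have d: "axis1_len \<noteq> 0" using axis1_len_pos by simp
  have k: "2 * (1 - ampB) / (axis1_len * axis1_len) = 1"
    unfolding axis1_len_sq using ampB_less_1 by simp
  have first: "mvec Nq (branch_refl (- ampC / axis1_len) ((1 - ampB) / axis1_len) 0) (lvec (bvec (\<lambda>_ _ _. 0) Y W))
      = lvec (bvec (\<lambda>a b c. ampC * Y a b c) (\<lambda>a b c. ampB * Y a b c) W)"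
    unfolding branch_refl_apply
  proof (rule arg_cong[where f=lvec], rule bvec_cong)
    fix a b c
    have "0 - 2 * (- ampC / axis1_len) * (- ampC / axis1_len * 0 + (1 - ampB) / axis1_len * Y a b c + 0 * W a b c)
        = ampC * Y a b c * (2 * (1 - ampB) / (axis1_len * axis1_len))"
      using d by (simp add: field_simps)
    then show "0 - 2 * (- ampC / axis1_len) * (- ampC / axis1_len * 0 + (1 - ampB) / axis1_len * Y a b c + 0 * W a b c)
        = ampC * Y a b c" unfolding k by simp
    have "Y a b c - 2 * ((1 - ampB) / axis1_len) * (- ampC / axis1_len * 0 + (1 - ampB) / axis1_len * Y a b c + 0 * W a b c)
        = Y a b c * (1 - (1 - ampB) * (2 * (1 - ampB) / (axis1_len * axis1_len)))"
      using d by (simp add: field_simps)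
    then show "Y a b c - 2 * ((1 - ampB) / axis1_len) * (- ampC / axis1_len * 0 + (1 - ampB) / axis1_len * Y a b c + 0 * W a b c)
        = ampB * Y a b c" unfolding k by simp
  qed simp
  have s: "sqrt 2 * sqrt 2 = (2::real)" by simp
  have second: "mvec Nq (branch_refl (ampB / sqrt 2) (- ampC / sqrt 2) (1 / sqrt 2))
        (lvec (bvec (\<lambda>a b c. ampC * Y a b c) (\<lambda>a b c. ampB * Y a b c) W))
      = lvec (bvec (\<lambda>a b c. ampC * Y a b c - ampB * W a b c) (\<lambda>a b c. ampB * Y a b c + ampC * W a b c) (\<lambda>_ _ _. 0))"
    unfolding branch_refl_apply
    by (rule arg_cong[where f=lvec], rule bvec_cong) (simp_all add: field_simps s)
  show ?thesis unfolding U_mid_def mvec_mmul first second ..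
qed

definition "psi x = bvec (\<lambda>a b c. normT * ampB * ampC * zsign x a * (zsign x b - zsign x c))
                         (\<lambda>a b c. normT * (ampB^2 + ampC^2 * zsign x b * zsign x c)) (\<lambda>_ _ _. 0)"

lemma psi_eq: "query_r x (mvec Nq U_mid (query_r x (mvec Nq U_init init_r))) = lvec (psi x)"
proof -
  have first_query: "query_r x (mvec Nq U_init init_r)
      = lvec (bvec (\<lambda>_ _ _. 0) (\<lambda>a b c. zsign x b * (normT * ampB)) (\<lambda>a b c. zsign x c * (normT * ampC)))"
    unfolding U_init_apply phi_lbl_def query_bvec by simp
  show ?thesis unfolding first_query U_mid_apply query_bvec psi_def
  proof (rule arg_cong[where f=lvec], rule bvec_cong)
    fix a b c
    show "zsign x a * (ampC * (zsign x b * (normT * ampB)) - ampB * (zsign x c * (normT * ampC)))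
        = normT * ampB * ampC * zsign x a * (zsign x b - zsign x c)"
      by (simp only: algebra_simps)
    have "zsign x b * (ampB * (zsign x b * (normT * ampB)) + ampC * (zsign x c * (normT * ampC)))
        = normT * (ampB^2 * (zsign x b * zsign x b) + ampC^2 * zsign x b * zsign x c)"
      by (simp only: algebra_simps power2_eq_square)
    then show "zsign x b * (ampB * (zsign x b * (normT * ampB)) + ampC * (zsign x c * (normT * ampC)))
        = normT * (ampB^2 + ampC^2 * zsign x b * zsign x c)"
      by (simp only: zsign_sq mult_1_right)
  qed simp
qed

subsection \<open>The third unitary\<close>

definition kron :: "nat \<Rightarrow> nat \<Rightarrow> real" where "kron j b = (if b = j then 1 else 0)"

lemma kron_sym: "kron j k = kron k j" unfolding kron_def by auto

lemma sum_kron_kron: "k \<in> Dom \<Longrightarrow> (\<Sum>l\<in>Dom. kron k l * kron l u) = kron k u"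
proof -
  assume k: "k \<in> Dom"
  have "kron k l * kron l u = (if l = k then kron k u else 0)" for l by (simp add: kron_def)
  then show ?thesis using k by simp
qed

lemma sum_kron_left: "k \<in> Dom \<Longrightarrow> (\<Sum>l\<in>Dom. kron k l) = 1"
  by (simp add: kron_def)

lemma sum_kron_right: "u \<in> Dom \<Longrightarrow> (\<Sum>l\<in>Dom. kron l u) = 1"
  by (simp add: kron_def)

lemma sum_kron_pick: "j0 \<in> Dom \<Longrightarrow> (\<Sum>j\<in>Dom. C * kron j0 j * g j) = C * g j0"
proof -
  assume j0: "j0 \<in> Dom"
  have "C * kron j0 j * g j = (if j0 = j then C * g j0 else 0)" for j by (simp add: kron_def)
  then show ?thesis using j0 by simp
qed

lemma sum_kron_weight: "m \<in> Dom \<Longrightarrow> (\<Sum>j\<in>Dom. g j * kron j m) = g m"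
proof -
  assume m: "m \<in> Dom"
  have "g j * kron j m = (if j = m then g m else 0)" for j by (simp add: kron_def)
  then show ?thesis using m by simp
qed

lemma pair_sum_bb: "j \<in> Dom \<Longrightarrow> k \<in> Dom \<Longrightarrow> (\<Sum>b\<in>Dom. \<Sum>c\<in>Dom-{b}. kron j b * kron k b) = (real n - 1) * kron j k"
proof -
  assume j: "j \<in> Dom" and k: "k \<in> Dom"
  have "(\<Sum>b\<in>Dom. \<Sum>c\<in>Dom-{b}. kron j b * kron k b) = (\<Sum>b\<in>Dom. (real n - 1) * (kron j b * kron k b))"
    by (intro sum.cong refl) (simp add: real_n_minus)
  also have "\<dots> = (\<Sum>b\<in>Dom. if b = j then (real n - 1) * kron k j else 0)"
    by (intro sum.cong refl) (simp add: kron_def)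
  also have "\<dots> = (real n - 1) * kron j k" using j by (simp add: kron_def)
  finally show ?thesis .
qed

lemma pair_sum_bc: "j \<in> Dom \<Longrightarrow> k \<in> Dom \<Longrightarrow> (\<Sum>b\<in>Dom. \<Sum>c\<in>Dom-{b}. kron j b * kron k c) = 1 - kron j k"
proof -
  assume j: "j \<in> Dom" and k: "k \<in> Dom"
  have "(\<Sum>b\<in>Dom. \<Sum>c\<in>Dom-{b}. kron j b * kron k c) = (\<Sum>b\<in>Dom. if b = j then (\<Sum>c\<in>Dom-{j}. kron k c) else 0)"
    by (intro sum.cong refl) (simp add: kron_def)
  also have "\<dots> = (\<Sum>c\<in>Dom-{j}. kron k c)" using j by simp
  also have "\<dots> = (\<Sum>c\<in>Dom-{j}. if c = k then 1 else 0)" by (simp add: kron_def)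
  also have "\<dots> = 1 - kron j k" using k by (simp add: kron_def)
  finally show ?thesis .
qed

lemma pair_sum_cb: "j \<in> Dom \<Longrightarrow> k \<in> Dom \<Longrightarrow> (\<Sum>b\<in>Dom. \<Sum>c\<in>Dom-{b}. kron j c * kron k b) = 1 - kron j k"
proof -
  assume j: "j \<in> Dom" and k: "k \<in> Dom"
  have "(\<Sum>b\<in>Dom. \<Sum>c\<in>Dom-{b}. kron j c * kron k b) = (\<Sum>b\<in>Dom. \<Sum>c\<in>Dom-{b}. kron k b * kron j c)"
    by (simp add: mult.commute)
  also have "\<dots> = 1 - kron k j" by (rule pair_sum_bc[OF k j])
  also have "kron k j = kron j k" by (simp add: kron_def)
  finally show ?thesis .
qed

lemma pair_sum_cc: "j \<in> Dom \<Longrightarrow> k \<in> Dom \<Longrightarrow> (\<Sum>b\<in>Dom. \<Sum>c\<in>Dom-{b}. kron j c * kron k c) = (real n - 1) * kron j k"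
proof -
  assume j: "j \<in> Dom" and k: "k \<in> Dom"
  define h where "h c = kron j c * kron k c" for c
  have hc: "h c = (if c = j then kron j k else 0)" for c unfolding h_def kron_def by auto
  have Sh: "(\<Sum>c\<in>Dom. h c) = kron j k" using j unfolding hc by simp
  have "(\<Sum>b\<in>Dom. \<Sum>c\<in>Dom-{b}. h c) = (\<Sum>b\<in>Dom. (\<Sum>c\<in>Dom. h c) - h b)"
    by (intro sum.cong refl) (simp add: sum_diff1)
  also have "\<dots> = real n * (\<Sum>c\<in>Dom. h c) - (\<Sum>b\<in>Dom. h b)" by (simp add: sum_subtractf)
  also have "\<dots> = (real n - 1) * kron j k" unfolding Sh by (simp add: algebra_simps)
  finally show ?thesis unfolding h_def .
qed

lemma pair_sum_sym: "j \<in> Dom \<Longrightarrow> k \<in> Dom \<Longrightarrow>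
  (\<Sum>b\<in>Dom. \<Sum>c\<in>Dom-{b}. (kron j b + kron j c) * (kron k b + kron k c)) = 2 * (real n - 2) * kron j k + 2"
proof -
  assume j: "j \<in> Dom" and k: "k \<in> Dom"
  have "(\<Sum>b\<in>Dom. \<Sum>c\<in>Dom-{b}. (kron j b + kron j c) * (kron k b + kron k c))
    = (\<Sum>b\<in>Dom. \<Sum>c\<in>Dom-{b}. kron j b * kron k b) + (\<Sum>b\<in>Dom. \<Sum>c\<in>Dom-{b}. kron j b * kron k c)
      + (\<Sum>b\<in>Dom. \<Sum>c\<in>Dom-{b}. kron j c * kron k b) + (\<Sum>b\<in>Dom. \<Sum>c\<in>Dom-{b}. kron j c * kron k c)"
  proof -
    have e: "(kron j b + kron j c) * (kron k b + kron k c) = kron j b * kron k b + kron j b * kron k c + kron j c * kron k b + kron j c * kron k c" for b c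
      by (simp add: algebra_simps)
    show ?thesis by (simp only: e sum.distrib)
  qed
  also have "\<dots> = 2 * (real n - 2) * kron j k + 2" unfolding pair_sum_bb[OF j k] pair_sum_bc[OF j k] pair_sum_cb[OF j k] pair_sum_cc[OF j k]
    by (simp add: algebra_simps)
  finally show ?thesis .
qed

lemma pair_sum_asym: "j \<in> Dom \<Longrightarrow> k \<in> Dom \<Longrightarrow>
  (\<Sum>b\<in>Dom. \<Sum>c\<in>Dom-{b}. (kron j b - kron j c) * (kron k b - kron k c)) = 2 * real n * kron j k - 2"
proof -
  assume j: "j \<in> Dom" and k: "k \<in> Dom"
  have "(\<Sum>b\<in>Dom. \<Sum>c\<in>Dom-{b}. (kron j b - kron j c) * (kron k b - kron k c))
    = (\<Sum>b\<in>Dom. \<Sum>c\<in>Dom-{b}. kron j b * kron k b) - (\<Sum>b\<in>Dom. \<Sum>c\<in>Dom-{b}. kron j b * kron k c)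
      - (\<Sum>b\<in>Dom. \<Sum>c\<in>Dom-{b}. kron j c * kron k b) + (\<Sum>b\<in>Dom. \<Sum>c\<in>Dom-{b}. kron j c * kron k c)"
  proof -
    have e: "(kron j b - kron j c) * (kron k b - kron k c) = kron j b * kron k b - kron j b * kron k c - kron j c * kron k b + kron j c * kron k c" for b c
      by (simp add: algebra_simps)
    show ?thesis by (simp only: e sum.distrib sum_subtractf)
  qed
  also have "\<dots> = 2 * real n * kron j k - 2" unfolding pair_sum_bb[OF j k] pair_sum_bc[OF j k] pair_sum_cb[OF j k] pair_sum_cc[OF j k]
    by (simp add: algebra_simps)
  finally show ?thesis .
qed

text \<open>The 2n vectors spanning the reflection subspace of U_final: for j in Dom,
  sym_amp j = SUM_T (d_jb + d_jc)|b>|T> and asym_amp j = SUM_T (d_jb - d_jc)|a>|T>, tensored with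
  (|0> - |1>)/sqrt 2 on the output qubit.\<close>

definition "sym_amp j = bamp (\<lambda>_ _ _. 0) (\<lambda>a b c. kron j b + kron j c) (\<lambda>_ _ _. 0)"
definition "asym_amp j = bamp (\<lambda>a b c. kron j b - kron j c) (\<lambda>_ _ _. 0) (\<lambda>_ _ _. 0)"

definition span_amp :: "nat + nat \<Rightarrow> nat \<Rightarrow> nat \<Rightarrow> nat \<Rightarrow> nat \<Rightarrow> real" where
  "span_amp u = (case u of Inl j \<Rightarrow> sym_amp j | Inr j \<Rightarrow> asym_amp j)"

lemma span_amp_Inl: "span_amp (Inl j) = sym_amp j" and span_amp_Inr: "span_amp (Inr j) = asym_amp j"
  unfolding span_amp_def by simp_all

definition minus_amp :: "nat \<Rightarrow> real" where "minus_amp ob = (if ob = 0 then 1 / sqrt 2 else - 1 / sqrt 2)"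

definition "span_vec u = lvec (\<lambda>i a b c ob. span_amp u i a b c * minus_amp ob)"

definition "Kidx = Inl ` Dom \<union> Inr ` Dom"

lemma sum_Kidx: "(\<Sum>u\<in>Kidx. h u) = (\<Sum>j\<in>Dom. h (Inl j)) + (\<Sum>j\<in>Dom. h (Inr j))"
proof -
  have "(\<Sum>u\<in>Kidx. h u) = (\<Sum>u\<in>Inl ` Dom. h u) + (\<Sum>u\<in>Inr ` Dom. h u)"
    unfolding Kidx_def by (rule sum.union_disjoint) auto
  also have "\<dots> = (\<Sum>j\<in>Dom. h (Inl j)) + (\<Sum>j\<in>Dom. h (Inr j))"
    by (simp add: sum.reindex)
  finally show ?thesis .
qed

lemma finite_Kidx: "finite Kidx" unfolding Kidx_def by simp

lemma dotp_span_vec: "dotp Nq (span_vec u) (lvec V) = ssum (\<lambda>i a b c. span_amp u i a b c * (minus_amp 0 * V i a b c 0 + minus_amp 1 * V i a b c 1))"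
  unfolding span_vec_def dotp_lvec lsum_def ssum_def sum_lessThan_2 by (intro sum.cong refl) (simp add: algebra_simps)

lemma dotp_span_vecs: "dotp Nq (span_vec u) (span_vec v) = ssum (\<lambda>i a b c. span_amp u i a b c * span_amp v i a b c)"
proof -
  have "dotp Nq (span_vec u) (span_vec v) = ssum (\<lambda>i a b c. span_amp u i a b c * (minus_amp 0 * (span_amp v i a b c * minus_amp 0) + minus_amp 1 * (span_amp v i a b c * minus_amp 1)))"
    unfolding span_vec_def[of v] dotp_span_vec ..
  also have "\<dots> = ssum (\<lambda>i a b c. span_amp u i a b c * span_amp v i a b c)"
  proof -
    have "minus_amp 0 * (y * minus_amp 0) + minus_amp 1 * (y * minus_amp 1) = y" for y
      unfolding minus_amp_def by simp
    then show ?thesis by simp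
  qed
  finally show ?thesis .
qed

text \<open>Matrices on Dom of the form x I + y J (J the all-ones matrix) multiply by a simple rule;
  both diagonal blocks of the Gram matrix, of its generalised inverse and of their
  product have this form.\<close>

definition ij :: "real \<Rightarrow> real \<Rightarrow> nat \<Rightarrow> nat \<Rightarrow> real" where "ij x y j k = x * kron j k + y"

definition gram :: "nat + nat \<Rightarrow> nat + nat \<Rightarrow> real" where
  "gram u v = (case (u, v) of
       (Inl j, Inl k) \<Rightarrow> ij (2 * (real n - 2)^2) (2 * (real n - 2)) j k
     | (Inr j, Inr k) \<Rightarrow> ij (2 * real n * (real n - 2)) (- 2 * (real n - 2)) j k
     | _ \<Rightarrow> 0)"

lemma gram_eq: "u \<in> Kidx \<Longrightarrow> v \<in> Kidx \<Longrightarrow> dotp Nq (span_vec u) (span_vec v) = gram u v"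
proof -
  assume u: "u \<in> Kidx" and v: "v \<in> Kidx"
  show ?thesis
  proof (cases u; cases v)
    fix j k assume uj: "u = Inl j" and vk: "v = Inl k"
    have j: "j \<in> Dom" and k: "k \<in> Dom" using u v uj vk unfolding Kidx_def by auto
    have "dotp Nq (span_vec u) (span_vec v) = (\<Sum>b\<in>Dom. \<Sum>c\<in>Dom-{b}. \<Sum>a\<in>Dom-{b,c}. 0 * 0 + (kron j b + kron j c) * (kron k b + kron k c) + 0 * 0)"
      unfolding dotp_span_vecs uj vk span_amp_def sym_amp_def by (simp only: sum.case ssum_bamp)
    also have "\<dots> = (\<Sum>b\<in>Dom. \<Sum>c\<in>Dom-{b}. (real n - 2) * ((kron j b + kron j c) * (kron k b + kron k c)))"
      by (intro sum.cong refl) (simp add: sum_a_const)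
    also have "\<dots> = (real n - 2) * (\<Sum>b\<in>Dom. \<Sum>c\<in>Dom-{b}. (kron j b + kron j c) * (kron k b + kron k c))"
      by (simp add: sum_distrib_left)
    also have "\<dots> = gram u v" unfolding pair_sum_sym[OF j k] gram_def ij_def uj vk
      by (simp add: algebra_simps power2_eq_square)
    finally show ?thesis .
  next
    fix j k assume uj: "u = Inl j" and vk: "v = Inr k"
    have "dotp Nq (span_vec u) (span_vec v) = (\<Sum>b\<in>Dom. \<Sum>c\<in>Dom-{b}. \<Sum>a\<in>Dom-{b,c}. 0 * (kron k b - kron k c) + (kron j b + kron j c) * 0 + 0 * 0)"
      unfolding dotp_span_vecs uj vk span_amp_def sym_amp_def asym_amp_def by (simp only: sum.case ssum_bamp)
    also have "\<dots> = gram u v" unfolding gram_def uj vk by simp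
    finally show ?thesis .
  next
    fix j k assume uj: "u = Inr j" and vk: "v = Inl k"
    have "dotp Nq (span_vec u) (span_vec v) = (\<Sum>b\<in>Dom. \<Sum>c\<in>Dom-{b}. \<Sum>a\<in>Dom-{b,c}. (kron j b - kron j c) * 0 + 0 * (kron k b + kron k c) + 0 * 0)"
      unfolding dotp_span_vecs uj vk span_amp_def sym_amp_def asym_amp_def by (simp only: sum.case ssum_bamp)
    also have "\<dots> = gram u v" unfolding gram_def uj vk by simp
    finally show ?thesis .
  next
    fix j k assume uj: "u = Inr j" and vk: "v = Inr k"
    have j: "j \<in> Dom" and k: "k \<in> Dom" using u v uj vk unfolding Kidx_def by auto
    have "dotp Nq (span_vec u) (span_vec v) = (\<Sum>b\<in>Dom. \<Sum>c\<in>Dom-{b}. \<Sum>a\<in>Dom-{b,c}. (kron j b - kron j c) * (kron k b - kron k c) + 0 * 0 + 0 * 0)"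
      unfolding dotp_span_vecs uj vk span_amp_def asym_amp_def by (simp only: sum.case ssum_bamp)
    also have "\<dots> = (\<Sum>b\<in>Dom. \<Sum>c\<in>Dom-{b}. (real n - 2) * ((kron j b - kron j c) * (kron k b - kron k c)))"
      by (intro sum.cong refl) (simp add: sum_a_const)
    also have "\<dots> = (real n - 2) * (\<Sum>b\<in>Dom. \<Sum>c\<in>Dom-{b}. (kron j b - kron j c) * (kron k b - kron k c))"
      by (simp add: sum_distrib_left)
    also have "\<dots> = gram u v" unfolding pair_sum_asym[OF j k] gram_def ij_def uj vk
      by (simp add: algebra_simps)
    finally show ?thesis .
  qed
qed

lemma ij_mult:
  assumes "j \<in> Dom" "k \<in> Dom"
  shows "(\<Sum>l\<in>Dom. ij x1 y1 j l * ij x2 y2 l k) = ij (x1 * x2) (x1 * y2 + y1 * x2 + real n * y1 * y2) j k"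
proof -
  have "ij x1 y1 j l * ij x2 y2 l k
      = x1 * x2 * (kron j l * kron l k) + x1 * y2 * kron j l + y1 * x2 * kron l k + y1 * y2" for l
    unfolding ij_def by (simp add: algebra_simps)
  then show ?thesis
    using sum_kron_kron[OF assms(1), of k] sum_kron_left[OF assms(1)] sum_kron_right[OF assms(2)]
    by (simp add: sum.distrib sum_distrib_left[symmetric] ij_def)
qed

text \<open>On the symmetric block it is the true
  inverse; the antisymmetric vectors satisfy SUM_j asym_j = 0, and there ginv times gram is
  the projection I - J/n onto the complement of the all-ones vector.\<close>

definition ginv :: "nat + nat \<Rightarrow> nat + nat \<Rightarrow> real" where
  "ginv u v = (case (u, v) of
       (Inl j, Inl k) \<Rightarrow> ij (1 / (2 * (real n - 2)^2)) (- 1 / (4 * (real n - 1) * (real n - 2)^2)) j k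
     | (Inr j, Inr k) \<Rightarrow> ij (1 / (2 * real n * (real n - 2))) 0 j k
     | _ \<Rightarrow> 0)"

definition ginv_gram :: "nat + nat \<Rightarrow> nat + nat \<Rightarrow> real" where
  "ginv_gram u v = (case (u, v) of (Inl j, Inl k) \<Rightarrow> kron j k | (Inr j, Inr k) \<Rightarrow> kron j k - 1 / real n | _ \<Rightarrow> 0)"

lemma ginv_sym_coeff:
  fixes t s m :: real
  assumes "t \<noteq> 0" "s \<noteq> 0" "s = t + 1" "m = t + 2"
  shows "1 / (2 * t^2) * (2 * t) + - 1 / (4 * s * t^2) * (2 * t^2) + m * (- 1 / (4 * s * t^2)) * (2 * t) = 0"
proof -
  have "1 / (2 * t^2) * (2 * t) + - 1 / (4 * s * t^2) * (2 * t^2) + m * (- 1 / (4 * s * t^2)) * (2 * t)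
     = (2 * s - t - m) / (2 * t * s)"
    using assms(1,2) by (simp add: field_simps power2_eq_square)
  then show ?thesis using assms(3,4) by simp
qed

lemma ginv_asym_coeff:
  fixes t m :: real
  assumes "t \<noteq> 0" "m \<noteq> 0"
  shows "1 / (2 * m * t) * (- 2 * t) = - 1 / m"
  using assms by (simp add: field_simps)

lemma ginv_gram_eq:
  assumes k: "k \<in> Kidx" and u: "u \<in> Kidx"
  shows "(\<Sum>l\<in>Kidx. ginv k l * gram l u) = ginv_gram k u"
proof -
  have nz: "real n \<noteq> 0" "real n - 1 \<noteq> 0" "real n - 2 \<noteq> 0" using n_ge_4 by auto
  show ?thesis
  proof (cases k; cases u)
    fix j m assume kj: "k = Inl j" and um: "u = Inl m"
    have j: "j \<in> Dom" and m: "m \<in> Dom" using k u kj um unfolding Kidx_def by auto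
    define x1 y1 x2 y2 where "x1 = 1 / (2 * (real n - 2)^2)"
      and "y1 = - 1 / (4 * (real n - 1) * (real n - 2)^2)"
      and "x2 = 2 * (real n - 2)^2" and "y2 = 2 * (real n - 2)"
    have "(\<Sum>l\<in>Kidx. ginv k l * gram l u) = (\<Sum>l\<in>Dom. ij x1 y1 j l * ij x2 y2 l m)"
      unfolding sum_Kidx kj um ginv_def gram_def x1_def y1_def x2_def y2_def by simp
    also have "\<dots> = ij (x1 * x2) (x1 * y2 + y1 * x2 + real n * y1 * y2) j m" by (rule ij_mult[OF j m])
    also have "x1 * x2 = 1" unfolding x1_def x2_def using nz by simp
    also have "x1 * y2 + y1 * x2 + real n * y1 * y2 = 0"
      unfolding x1_def y1_def x2_def y2_def by (rule ginv_sym_coeff) (use nz in auto)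
    finally show ?thesis unfolding ginv_gram_def ij_def kj um by simp
  next
    fix j m assume kj: "k = Inr j" and um: "u = Inr m"
    have j: "j \<in> Dom" and m: "m \<in> Dom" using k u kj um unfolding Kidx_def by auto
    define x1 x2 y2 where "x1 = 1 / (2 * real n * (real n - 2))"
      and "x2 = 2 * real n * (real n - 2)" and "y2 = - 2 * (real n - 2)"
    have "(\<Sum>l\<in>Kidx. ginv k l * gram l u) = (\<Sum>l\<in>Dom. ij x1 0 j l * ij x2 y2 l m)"
      unfolding sum_Kidx kj um ginv_def gram_def x1_def x2_def y2_def by simp
    also have "\<dots> = ij (x1 * x2) (x1 * y2 + 0 * x2 + real n * 0 * y2) j m" by (rule ij_mult[OF j m])
    also have "x1 * x2 = 1" unfolding x1_def x2_def using nz by simp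
    also have "x1 * y2 + 0 * x2 + real n * 0 * y2 = x1 * y2" by simp
    also have "x1 * y2 = - 1 / real n" unfolding x1_def y2_def by (rule ginv_asym_coeff[OF nz(3) nz(1)])
    finally show ?thesis unfolding ginv_gram_def ij_def kj um by simp
  qed (simp_all add: sum_Kidx ginv_def gram_def ginv_gram_def)
qed

text \<open>The projection SUM span_vec_k ginv_kl span_vec_l^T fixes every span_vec u, so U_final is
  the reflection about the span of the span vectors.\<close>

lemma sum_asym_span_vec: "(\<Sum>j\<in>Dom. span_vec (Inr j) r) = 0"
proof (cases "r < Nq \<and> triple (idx_a r) (idx_b r) (idx_c r)")
  case True
  then have b: "idx_b r \<in> Dom" and c: "idx_c r \<in> Dom" unfolding triple_def by auto
  have "(\<Sum>j\<in>Dom. span_vec (Inr j) r) = (\<Sum>j\<in>Dom. (kron j (idx_b r) - kron j (idx_c r))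
          * (if idx_in r = idx_a r then minus_amp (idx_out r) else 0))"
    unfolding span_vec_def lvec_def span_amp_Inr asym_amp_def bamp_def tri_def using True
    by (intro sum.cong refl) simp
  also have "\<dots> = ((\<Sum>j\<in>Dom. kron j (idx_b r)) - (\<Sum>j\<in>Dom. kron j (idx_c r)))
      * (if idx_in r = idx_a r then minus_amp (idx_out r) else 0)"
    by (simp add: left_diff_distrib sum_subtractf sum_distrib_right)
  also have "\<dots> = 0" unfolding sum_kron_right[OF b] sum_kron_right[OF c] by simp
  finally show ?thesis .
next
  case False
  then have "span_vec (Inr j) r = 0" for j
    unfolding span_vec_def lvec_def span_amp_Inr asym_amp_def bamp_def by auto
  then show ?thesis by simp
qed

lemma proj_span_vec:
  assumes u: "u \<in> Kidx"
  shows "(\<Sum>k\<in>Kidx. \<Sum>l\<in>Kidx. span_vec k r * ginv k l * dotp Nq (span_vec l) (span_vec u)) = span_vec u r"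
proof -
  have "(\<Sum>k\<in>Kidx. \<Sum>l\<in>Kidx. span_vec k r * ginv k l * dotp Nq (span_vec l) (span_vec u))
      = (\<Sum>k\<in>Kidx. span_vec k r * (\<Sum>l\<in>Kidx. ginv k l * gram l u))"
    using gram_eq u by (simp add: sum_distrib_left mult.assoc)
  also have "\<dots> = (\<Sum>k\<in>Kidx. span_vec k r * ginv_gram k u)"
    using ginv_gram_eq u by (intro sum.cong refl) simp
  also have "\<dots> = span_vec u r"
  proof (cases u)
    case (Inl m)
    then have m: "m \<in> Dom" using u unfolding Kidx_def by auto
    show ?thesis unfolding sum_Kidx ginv_gram_def Inl
      using sum_kron_weight[OF m, of "\<lambda>j. span_vec (Inl j) r"] by simp
  next
    case (Inr m)
    then have m: "m \<in> Dom" using u unfolding Kidx_def by auto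
    have "(\<Sum>k\<in>Kidx. span_vec k r * ginv_gram k u)
        = (\<Sum>j\<in>Dom. span_vec (Inr j) r * kron j m) - (\<Sum>j\<in>Dom. span_vec (Inr j) r) / real n"
      unfolding sum_Kidx ginv_gram_def Inr by (simp add: algebra_simps sum_subtractf sum_divide_distrib)
    then show ?thesis unfolding sum_asym_span_vec Inr
      using sum_kron_weight[OF m, of "\<lambda>j. span_vec (Inr j) r"] by simp
  qed
  finally show ?thesis .
qed

definition "U_final = reflection Kidx span_vec ginv"

lemma U_final_orthogonal: "orth_mat Nq U_final"
  unfolding U_final_def
proof (rule reflection_orthogonal)
  show "\<And>k l. k \<in> Kidx \<Longrightarrow> l \<in> Kidx \<Longrightarrow> ginv k l = ginv l k"
    unfolding ginv_def ij_def by (auto simp: kron_sym split: sum.split)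
qed (rule proj_span_vec)

lemma U_final_fixes_orth:
  assumes "\<And>u. u \<in> Kidx \<Longrightarrow> dotp Nq (span_vec u) v = 0" "r < Nq"
  shows "mvec Nq U_final v r = v r"
  unfolding U_final_def reflection_apply[OF assms(2)] using assms(1) by simp

lemma dotp_span_vec_bvec:
  "dotp Nq (span_vec u) (lvec (bvec F1 F2 F3)) = minus_amp 1 * ssum (\<lambda>i a b c. span_amp u i a b c * bamp F1 F2 F3 i a b c)"
proof -
  have "dotp Nq (span_vec u) (lvec (bvec F1 F2 F3)) = ssum (\<lambda>i a b c. minus_amp 1 * (span_amp u i a b c * bamp F1 F2 F3 i a b c))"
    unfolding dotp_span_vec bvec_def by (simp add: mult.left_commute)
  then show ?thesis by (simp only: ssum_cmult)
qed

lemma U_final_flips_span: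
  assumes B: "\<And>i a b c. bamp F1 F2 F3 i a b c = (\<Sum>u\<in>Kidx. coef u * span_amp u i a b c)"
    and r: "i < n1" "a < n1" "b < n1" "c < n1"
  shows "mvec Nq U_final (lvec (bvec F1 F2 F3)) (idx i a b c 1) = 0"
proof -
  let ?v = "lvec (bvec F1 F2 F3)"
  have r1: "(1::nat) < 2" by simp
  have comb: "dotp Nq (span_vec l) ?v = (\<Sum>u\<in>Kidx. (coef u * minus_amp 1) * dotp Nq (span_vec l) (span_vec u))" for l
  proof -
    have "dotp Nq (span_vec l) ?v = minus_amp 1 * (\<Sum>u\<in>Kidx. coef u * ssum (\<lambda>i a b c. span_amp l i a b c * span_amp u i a b c))"
      unfolding dotp_span_vec_bvec B sum_distrib_left ssum_sum[symmetric] ssum_cmult[symmetric]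
      by (simp add: mult.left_commute)
    then show ?thesis unfolding dotp_span_vecs by (simp add: sum_distrib_left mult_ac)
  qed
  have "(\<Sum>k\<in>Kidx. \<Sum>l\<in>Kidx. span_vec k (idx i a b c 1) * ginv k l * dotp Nq (span_vec l) ?v)
      = (\<Sum>u\<in>Kidx. (coef u * minus_amp 1) * span_vec u (idx i a b c 1))"
    by (rule proj_combination[OF proj_span_vec comb finite_Kidx])
  also have "\<dots> = (minus_amp 1 * minus_amp 1) * bamp F1 F2 F3 i a b c"
    unfolding B span_vec_def lvec_idx[OF r r1] by (simp add: sum_distrib_left mult_ac)
  finally have proj: "(\<Sum>k\<in>Kidx. \<Sum>l\<in>Kidx. span_vec k (idx i a b c 1) * ginv k l * dotp Nq (span_vec l) ?v)
      = bamp F1 F2 F3 i a b c / 2"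
    unfolding minus_amp_def by simp
  show ?thesis
    unfolding U_final_def reflection_apply[OF idx_less[OF r r1]] proj lvec_idx[OF r r1] bvec_def by simp
qed

subsection \<open>Balanced inputs\<close>

lemma zsign_Suc: "zsign x (Suc k) = (if x ! k then -1 else 1)" unfolding zsign_def xbit_def by simp

lemma sum_zsign: "length x = n \<Longrightarrow> (\<Sum>i\<in>Dom. zsign x i) = real n - 2 * real (hamming_weight x)"
proof -
  assume l: "length x = n"
  have "(\<Sum>i\<in>Dom. zsign x i) = (\<Sum>k<n. zsign x (Suc k))"
    using sum.atLeast1_atMost_eq[of "zsign x" n] by simp
  also have "\<dots> = (\<Sum>k<length x. (if x ! k then -1 else 1::real))" unfolding zsign_Suc l ..
  finally show ?thesis using sum_signs_list[of x] unfolding l by simp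
qed

lemma sum_zsign_balanced:
  assumes "even n" "length x = n" "hamming_weight x = n div 2"
  shows "(\<Sum>i\<in>Dom. zsign x i) = 0"
proof -
  have "real n = 2 * real (n div 2)" using assms(1) by (auto elim: evenE)
  then show ?thesis using sum_zsign[OF assms(2)] assms(3) by simp
qed

lemma pair_sum_first: "j \<in> Dom \<Longrightarrow> (\<Sum>b\<in>Dom. \<Sum>c\<in>Dom-{b}. kron j b * h b c) = (\<Sum>c\<in>Dom-{j}. h j c)"
proof -
  assume j: "j \<in> Dom"
  have "(\<Sum>b\<in>Dom. \<Sum>c\<in>Dom-{b}. kron j b * h b c) = (\<Sum>b\<in>Dom. if b = j then (\<Sum>c\<in>Dom-{j}. h j c) else 0)"
    by (intro sum.cong refl) (simp add: kron_def)
  then show ?thesis using j by simp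
qed

lemma pair_sum_second: "j \<in> Dom \<Longrightarrow> (\<Sum>b\<in>Dom. \<Sum>c\<in>Dom-{b}. kron j c * h b c) = (\<Sum>b\<in>Dom-{j}. h b j)"
proof -
  assume j: "j \<in> Dom"
  have "(\<Sum>b\<in>Dom. \<Sum>c\<in>Dom-{b}. kron j c * h b c) = (\<Sum>b\<in>Dom. if b \<noteq> j then h b j else 0)"
  proof (intro sum.cong refl)
    fix b assume b: "b \<in> Dom"
    have "(\<Sum>c\<in>Dom-{b}. kron j c * h b c) = (\<Sum>c\<in>Dom-{b}. if c = j then h b j else 0)"
      by (intro sum.cong refl) (simp add: kron_def)
    also have "\<dots> = (if b \<noteq> j then h b j else 0)" using j by auto
    finally show "(\<Sum>c\<in>Dom-{b}. kron j c * h b c) = (if b \<noteq> j then h b j else 0)" .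
  qed
  also have "\<dots> = (\<Sum>b\<in>Dom-{j}. h b j)" by (simp add: sum.inter_filter[symmetric] set_diff_eq)
  finally show ?thesis .
qed

lemma sum_zsign_minus1: "j \<in> Dom \<Longrightarrow> (\<Sum>c\<in>Dom-{j}. zsign x c) = (\<Sum>c\<in>Dom. zsign x c) - zsign x j"
  by (simp add: sum_diff1)

lemma sum_zsign_minus2: "b \<in> Dom \<Longrightarrow> c \<in> Dom - {b} \<Longrightarrow> (\<Sum>a\<in>Dom-{b,c}. zsign x a) = (\<Sum>a\<in>Dom. zsign x a) - zsign x b - zsign x c"
proof -
  assume b: "b \<in> Dom" and c: "c \<in> Dom - {b}"
  have "Dom - {b, c} = (Dom - {b}) - {c}" by auto
  then show ?thesis using b c by (simp add: sum_diff1)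
qed

text \<open>If the signs sum to zero, psi x is orthogonal to all span vectors: the symmetric ones
  see (n-1) ampB^2 - ampC^2 = 0, the antisymmetric ones see z_b^2 - z_c^2 = 0.\<close>

lemma sym_span_orth_psi:
  assumes bal: "(\<Sum>i\<in>Dom. zsign x i) = 0" and j: "j \<in> Dom"
  shows "dotp Nq (span_vec (Inl j)) (lvec (psi x)) = 0"
proof -
  let ?h = "\<lambda>b c. normT * (ampB^2 + ampC^2 * zsign x b * zsign x c)"
  have row: "(\<Sum>c\<in>Dom-{j}. ?h j c) = 0"
  proof -
    have "(\<Sum>c\<in>Dom-{j}. ?h j c) = normT * ((real n - 1) * ampB^2 + ampC^2 * zsign x j * (\<Sum>c\<in>Dom-{j}. zsign x c))"
      using j by (simp add: sum.distrib sum_distrib_left real_n_minus algebra_simps)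
    also have "\<dots> = normT * ((real n - 1) * ampB^2 - ampC^2)"
      unfolding sum_zsign_minus1[OF j] bal using zsign_sq[of x j] by (simp add: algebra_simps)
    also have "\<dots> = 0" unfolding ampB_sq ampC_sq using n_ge_4 by (simp add: field_simps)
    finally show ?thesis .
  qed
  have first: "(\<Sum>b\<in>Dom. \<Sum>c\<in>Dom-{b}. kron j b * ?h b c) = 0"
    unfolding pair_sum_first[OF j] by (rule row)
  have second: "(\<Sum>b\<in>Dom. \<Sum>c\<in>Dom-{b}. kron j c * ?h b c) = 0"
    unfolding pair_sum_second[OF j] using row by (simp add: mult.commute mult.left_commute)
  have "dotp Nq (span_vec (Inl j)) (lvec (psi x))
      = minus_amp 1 * (\<Sum>b\<in>Dom. \<Sum>c\<in>Dom-{b}. \<Sum>a\<in>Dom-{b,c}. (kron j b + kron j c) * ?h b c)"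
    unfolding psi_def dotp_span_vec_bvec span_amp_Inl sym_amp_def ssum_bamp by simp
  also have "\<dots> = minus_amp 1 * (\<Sum>b\<in>Dom. \<Sum>c\<in>Dom-{b}. (real n - 2) * (kron j b * ?h b c + kron j c * ?h b c))"
    by (intro arg_cong[where f="\<lambda>s. minus_amp 1 * s"] sum.cong refl) (simp add: sum_a_const algebra_simps)
  also have "\<dots> = minus_amp 1 * ((real n - 2) * (\<Sum>b\<in>Dom. \<Sum>c\<in>Dom-{b}. kron j b * ?h b c + kron j c * ?h b c))"
    by (simp only: sum_distrib_left)
  also have "\<dots> = minus_amp 1 * ((real n - 2) * ((\<Sum>b\<in>Dom. \<Sum>c\<in>Dom-{b}. kron j b * ?h b c)
                                          + (\<Sum>b\<in>Dom. \<Sum>c\<in>Dom-{b}. kron j c * ?h b c)))"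
    by (simp only: sum.distrib)
  finally show ?thesis unfolding first second by simp
qed

lemma asym_span_orth_psi:
  assumes bal: "(\<Sum>i\<in>Dom. zsign x i) = 0"
  shows "dotp Nq (span_vec (Inr j)) (lvec (psi x)) = 0"
proof -
  let ?F = "\<lambda>a b c. normT * ampB * ampC * zsign x a * (zsign x b - zsign x c)"
  have inner: "(\<Sum>a\<in>Dom-{b,c}. (kron j b - kron j c) * ?F a b c) = 0" if b: "b \<in> Dom" and c: "c \<in> Dom - {b}" for b c
  proof -
    have "(\<Sum>a\<in>Dom-{b,c}. (kron j b - kron j c) * ?F a b c)
        = (kron j b - kron j c) * (normT * ampB * ampC) * (zsign x b - zsign x c) * (\<Sum>a\<in>Dom-{b,c}. zsign x a)"
      by (simp add: sum_distrib_left mult_ac)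
    also have "\<dots> = (kron j b - kron j c) * (normT * ampB * ampC) * (zsign x c * zsign x c - zsign x b * zsign x b)"
      unfolding sum_zsign_minus2[OF b c] bal by (simp add: algebra_simps)
    also have "\<dots> = 0" by (simp add: zsign_sq)
    finally show ?thesis .
  qed
  have "dotp Nq (span_vec (Inr j)) (lvec (psi x))
      = minus_amp 1 * (\<Sum>b\<in>Dom. \<Sum>c\<in>Dom-{b}. \<Sum>a\<in>Dom-{b,c}. (kron j b - kron j c) * ?F a b c)"
    unfolding psi_def dotp_span_vec_bvec span_amp_Inr asym_amp_def ssum_bamp by simp
  also have "\<dots> = 0" using inner by simp
  finally show ?thesis .
qed

lemma balanced_orth:
  assumes bal: "(\<Sum>i\<in>Dom. zsign x i) = 0" and u: "u \<in> Kidx"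
  shows "dotp Nq (span_vec u) (lvec (psi x)) = 0"
  using u sym_span_orth_psi[OF bal] asym_span_orth_psi[OF bal] unfolding Kidx_def by auto

subsection \<open>Rejected inputs\<close>

lemma bamp_in_span:
  assumes f1: "\<And>a b c. triple a b c \<Longrightarrow> F1 a b c = (\<Sum>j\<in>Dom. cA j * (kron j b - kron j c))"
    and f2: "\<And>a b c. triple a b c \<Longrightarrow> F2 a b c = (\<Sum>j\<in>Dom. cS j * (kron j b + kron j c))"
    and f3: "\<And>a b c. F3 a b c = 0"
  shows "bamp F1 F2 F3 i a b c = (\<Sum>u\<in>Kidx. (case u of Inl j \<Rightarrow> cS j | Inr j \<Rightarrow> cA j) * span_amp u i a b c)"
proof (cases "triple a b c")
  case True
  then have d: "a \<noteq> b" "a \<noteq> c" "b \<noteq> c" unfolding triple_def by auto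
  have "(\<Sum>u\<in>Kidx. (case u of Inl j \<Rightarrow> cS j | Inr j \<Rightarrow> cA j) * span_amp u i a b c)
     = (\<Sum>j\<in>Dom. cS j * sym_amp j i a b c) + (\<Sum>j\<in>Dom. cA j * asym_amp j i a b c)"
    unfolding sum_Kidx span_amp_def by simp
  also have "\<dots> = (\<Sum>j\<in>Dom. cS j * tri 0 (kron j b + kron j c) 0 a b c i) + (\<Sum>j\<in>Dom. cA j * tri (kron j b - kron j c) 0 0 a b c i)"
    unfolding sym_amp_def asym_amp_def bamp_def using True by simp
  also have "\<dots> = bamp F1 F2 F3 i a b c"
    unfolding bamp_def tri_def using True d f1[OF True] f2[OF True] f3
    by (auto simp: sum_distrib_left[symmetric] if_distrib cong: if_cong)
  finally show ?thesis ..
next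
  case False
  then show ?thesis unfolding sum_Kidx span_amp_def sym_amp_def asym_amp_def bamp_def by simp
qed

text \<open>Every rejected input has signs z_i = eps (1 - 2 t d_(j0,i)) with eps = +-1: t = 0 for
  weights 0 and n, t = 1 (a single exceptional position j0) for weights 1 and n-1.\<close>
lemma rejected_signs:
  assumes l: "length x = n" and hw: "hamming_weight x \<in> {0, 1, n - 1, n}"
  obtains \<epsilon> j0 t where "\<epsilon> * \<epsilon> = (1::real)" "j0 \<in> Dom" "\<And>i. i \<in> Dom \<Longrightarrow> zsign x i = \<epsilon> * (1 - 2 * t * kron j0 i)"
proof -
  have zi: "zsign x i = (if x ! (i - 1) then -1 else 1)" if "i \<in> Dom" for i
    using that zsign_Suc[of x "i - 1"] by simp
  have one: "1 \<in> Dom" using n_ge by simp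
  have hc: "hamming_weight x = card {k. k < n \<and> x ! k}" using hamming_weight_card[of x] l by simp
  have hn: "card {k. k < n \<and> \<not> x ! k} = n - hamming_weight x" using card_false_positions[of x] l by simp
  consider "hamming_weight x = 0" | "hamming_weight x = 1" | "hamming_weight x = n - 1" | "hamming_weight x = n"
    using hw by auto
  then show ?thesis
  proof cases
    case 1
    then have "{k. k < n \<and> x ! k} = {}" using hc by simp
    then have z: "\<And>i. i \<in> Dom \<Longrightarrow> zsign x i = 1 * (1 - 2 * 0 * kron 1 i)" using zi by fastforce
    show ?thesis by (rule that[of 1 1 0, OF _ one z]) simp
  next
    case 4
    then have "{k. k < n \<and> \<not> x ! k} = {}" using hn by simp
    then have z: "\<And>i. i \<in> Dom \<Longrightarrow> zsign x i = -1 * (1 - 2 * 0 * kron 1 i)" using zi by fastforce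
    show ?thesis by (rule that[of "-1" 1 0, OF _ one z]) simp
  next
    case 2
    then obtain k0 where k0: "k0 < n" "\<And>k. k < n \<Longrightarrow> x ! k \<longleftrightarrow> k = k0"
      using card_1_witness hc by metis
    have z: "zsign x i = 1 * (1 - 2 * 1 * kron (Suc k0) i)" if i: "i \<in> Dom" for i
    proof -
      have "i - 1 < n" using i by auto
      then show ?thesis using zi[OF i] k0(2)[of "i - 1"] i unfolding kron_def by auto
    qed
    show ?thesis by (rule that[of 1 "Suc k0" 1, OF _ _ z]) (use k0(1) in simp_all)
  next
    case 3
    then have "card {k. k < n \<and> \<not> x ! k} = 1" using hn n_ge by simp
    then obtain k0 where k0: "k0 < n" "\<And>k. k < n \<Longrightarrow> \<not> x ! k \<longleftrightarrow> k = k0"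
      using card_1_witness by metis
    have z: "zsign x i = -1 * (1 - 2 * 1 * kron (Suc k0) i)" if i: "i \<in> Dom" for i
    proof -
      have "i - 1 < n" using i by auto
      then show ?thesis using zi[OF i] k0(2)[of "i - 1"] i unfolding kron_def by auto
    qed
    show ?thesis by (rule that[of "-1" "Suc k0" 1, OF _ _ z]) (use k0(1) in simp_all)
  qed
qed

lemma rejected_in_span:
  assumes e: "\<epsilon> * \<epsilon> = (1::real)" and j0: "j0 \<in> Dom"
    and z: "\<And>i. i \<in> Dom \<Longrightarrow> zsign x i = \<epsilon> * (1 - 2 * t * kron j0 i)"
  shows "\<exists>coef. \<forall>i a b c. bamp (\<lambda>a b c. normT * ampB * ampC * zsign x a * (zsign x b - zsign x c))
            (\<lambda>a b c. normT * (ampB^2 + ampC^2 * zsign x b * zsign x c)) (\<lambda>_ _ _. 0) i a b c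
          = (\<Sum>u\<in>Kidx. coef u * span_amp u i a b c)"
proof (intro exI allI, rule bamp_in_span[where cA="\<lambda>j. -2 * t * normT * ampB * ampC * kron j0 j"
      and cS="\<lambda>j. normT / 2 - 2 * t * normT * ampC^2 * kron j0 j"])
  fix a b c assume "triple a b c"
  then have a: "a \<in> Dom" and b: "b \<in> Dom" and c: "c \<in> Dom" and d: "a \<noteq> b" "a \<noteq> c" "b \<noteq> c"
    unfolding triple_def by auto
  have ee: "\<epsilon> * (\<epsilon> * y) = y" for y using e by (simp add: mult.assoc[symmetric])
  have z1: "zsign x a * (zsign x b - zsign x c) = -2 * t * (kron j0 b - kron j0 c)"
    unfolding z[OF a] z[OF b] z[OF c] using d
    by (cases "j0 = a"; cases "j0 = b"; cases "j0 = c") (simp_all add: kron_def algebra_simps ee)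
  have z2: "zsign x b * zsign x c = 1 - 2 * t * (kron j0 b + kron j0 c)"
    unfolding z[OF b] z[OF c] using d e
    by (cases "j0 = b"; cases "j0 = c") (simp_all add: kron_def algebra_simps ee)
  show "normT * ampB * ampC * zsign x a * (zsign x b - zsign x c)
      = (\<Sum>j\<in>Dom. -2 * t * normT * ampB * ampC * kron j0 j * (kron j b - kron j c))"
    unfolding sum_kron_pick[OF j0] mult.assoc[of "normT * ampB * ampC"] z1 by (simp only: mult_ac)
  have "(\<Sum>j\<in>Dom. (normT / 2 - 2 * t * normT * ampC^2 * kron j0 j) * (kron j b + kron j c))
      = (\<Sum>j\<in>Dom. normT / 2 * (kron j b + kron j c)) - (\<Sum>j\<in>Dom. 2 * t * normT * ampC^2 * kron j0 j * (kron j b + kron j c))"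
    by (simp only: left_diff_distrib sum_subtractf)
  also have "\<dots> = normT / 2 * ((\<Sum>j\<in>Dom. kron j b) + (\<Sum>j\<in>Dom. kron j c)) - 2 * t * normT * ampC^2 * (kron j0 b + kron j0 c)"
    unfolding sum_kron_pick[OF j0] sum_distrib_left[symmetric] sum.distrib ..
  also have "\<dots> = normT * ((ampB^2 + ampC^2) - 2 * t * ampC^2 * (kron j0 b + kron j0 c))"
    unfolding sum_kron_right[OF b] sum_kron_right[OF c] amp_sq_sum by (simp add: algebra_simps)
  finally show "normT * (ampB^2 + ampC^2 * zsign x b * zsign x c)
      = (\<Sum>j\<in>Dom. (normT / 2 - 2 * t * normT * ampC^2 * kron j0 j) * (kron j b + kron j c))"
    unfolding mult.assoc[of "ampC^2"] z2 by (simp add: algebra_simps)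
qed simp

subsection \<open>The algorithm\<close>

lemma query_of_real: "query_op n wdim x (\<lambda>c. complex_of_real (v c)) = (\<lambda>k. complex_of_real (query_r x v k))"
  unfolding query_op_def query_r_def Nq_def by (rule ext) simp

lemma init_of_real: "init_state = (\<lambda>k. complex_of_real (init_r k))"
  unfolding init_state_def init_r_def by (rule ext) simp

definition "fstate x = mvec Nq U_final (query_r x (mvec Nq U_mid (query_r x (mvec Nq U_init init_r))))"

lemma final_state_eq: "final_state n wdim x (cmat U_init) [cmat U_mid, cmat U_final] = (\<lambda>k. complex_of_real (fstate x k))"
  unfolding final_state_def fstate_def Nq_def[symmetric]
  by (simp add: init_of_real apply_op_of_real query_of_real)

text \<open>The final state is a unit vector, so the output probability of b is 1 as soon as the
  final state vanishes on all indices with output bit different from b.\<close>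
lemma fstate_norm: "(\<Sum>k<Nq. (fstate x k)^2) = 1"
  unfolding fstate_def orthogonal_norm[OF U_final_orthogonal] query_r_norm orthogonal_norm[OF U_mid_orthogonal] orthogonal_norm[OF U_init_orthogonal] init_r_norm ..

lemma prob_output_eq: "prob_output n wdim x (cmat U_init) [cmat U_mid, cmat U_final] ob = (\<Sum>k | k < Nq \<and> out_bit k = ob. (fstate x k)^2)"
  unfolding prob_output_def final_state_eq Nq_def[symmetric] by simp

lemma sum_sq_restrict:
  fixes G :: "nat \<Rightarrow> real"
  assumes "\<And>k. k < Nq \<Longrightarrow> out_bit k \<noteq> ob \<Longrightarrow> G k = 0"
  shows "(\<Sum>k | k < Nq \<and> out_bit k = ob. (G k)^2) = (\<Sum>k<Nq. (G k)^2)"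
proof (rule sum.mono_neutral_left)
  show "finite {..<Nq}" by simp
  show "{k. k < Nq \<and> out_bit k = ob} \<subseteq> {..<Nq}" by auto
  show "\<forall>i\<in>{..<Nq} - {k. k < Nq \<and> out_bit k = ob}. (G i)^2 = 0"
  proof
    fix i assume "i \<in> {..<Nq} - {k. k < Nq \<and> out_bit k = ob}"
    then have "G i = 0" using assms by auto
    then show "(G i)^2 = 0" by simp
  qed
qed

lemma fstate_psi: "fstate x = mvec Nq U_final (lvec (psi x))" unfolding fstate_def psi_eq ..

lemma accept_balanced:
  assumes "even n" "length x = n" "hamming_weight x = n div 2"
  shows "prob_output n wdim x (cmat U_init) [cmat U_mid, cmat U_final] 1 = 1"
proof -
  have bs: "(\<Sum>i\<in>Dom. zsign x i) = 0" by (rule sum_zsign_balanced[OF assms])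
  have z: "fstate x k = 0" if k: "k < Nq" and o: "out_bit k \<noteq> 1" for k
  proof -
    have "fstate x k = lvec (psi x) k" unfolding fstate_psi using U_final_fixes_orth[OF balanced_orth[OF bs] k] by simp
    also have "\<dots> = 0" unfolding lvec_def psi_def bvec_def using k o unfolding idx_out_def by simp
    finally show ?thesis .
  qed
  show ?thesis using prob_output_eq sum_sq_restrict[OF z] fstate_norm by simp
qed

lemma reject_extreme:
  assumes "length x = n" "hamming_weight x \<in> {0, 1, n - 1, n}"
  shows "prob_output n wdim x (cmat U_init) [cmat U_mid, cmat U_final] 0 = 1"
proof -
  obtain \<epsilon> j0 t where e: "\<epsilon> * \<epsilon> = (1::real)" and j0: "j0 \<in> Dom"
    and signs: "\<And>i. i \<in> Dom \<Longrightarrow> zsign x i = \<epsilon> * (1 - 2 * t * kron j0 i)"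
    by (rule rejected_signs[OF assms]) blast
  from rejected_in_span[OF e j0 signs] obtain coef where cf: "\<forall>i a b c.
      bamp (\<lambda>a b c. normT * ampB * ampC * zsign x a * (zsign x b - zsign x c))
        (\<lambda>a b c. normT * (ampB^2 + ampC^2 * zsign x b * zsign x c)) (\<lambda>_ _ _. 0) i a b c
      = (\<Sum>u\<in>Kidx. coef u * span_amp u i a b c)" ..
  have zero: "fstate x k = 0" if k: "k < Nq" and o: "out_bit k \<noteq> 0" for k
  proof -
    have o1: "idx_out k = 1" using o idx_encode(6)[OF k] unfolding idx_out_def by simp
    have kk': "k = idx (idx_in k) (idx_a k) (idx_b k) (idx_c k) 1" using idx_encode(1)[OF k] o1 by simp
    have "fstate x k = mvec Nq U_final (lvec (psi x)) (idx (idx_in k) (idx_a k) (idx_b k) (idx_c k) 1)" unfolding fstate_psi using kk' by simp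
    also have "\<dots> = 0" unfolding psi_def by (rule U_final_flips_span[OF cf[rule_format] idx_encode(2-5)[OF k]])
    finally show ?thesis .
  qed
  show ?thesis using prob_output_eq sum_sq_restrict[OF zero] fstate_norm by simp
qed

end

theorem mainTheorem5:
  fixes n :: nat
  assumes "even n" and "n \<ge> 4"
  shows "\<exists>(m::nat) U0 Us. m \<ge> 1 \<and> length Us = 2 \<and>
           unitary_op (qdim n m) U0 \<and> (\<forall>U \<in> set Us. unitary_op (qdim n m) U) \<and>
           (\<forall>x. length x = n \<and> hamming_weight x = n div 2 \<longrightarrow>
                prob_output n m x U0 Us 1 = 1) \<and>
           (\<forall>x. length x = n \<and> hamming_weight x \<in> {0, 1, n - 1, n} \<longrightarrow>
                prob_output n m x U0 Us 0 = 1)"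
proof -
  interpret construction n using assms(2) by unfold_locales
  have unitary: "unitary_op (qdim n wdim) (cmat U_init)" "unitary_op (qdim n wdim) (cmat U_mid)"
      "unitary_op (qdim n wdim) (cmat U_final)"
    unfolding Nq_def[symmetric] using unitary_of_real U_init_orthogonal U_mid_orthogonal U_final_orthogonal
    by auto
  show ?thesis
    using unitary wdim_pos accept_balanced[OF assms(1)] reject_extreme
    by (intro exI[of _ wdim] exI[of _ "cmat U_init"] exI[of _ "[cmat U_mid, cmat U_final]"]) auto
qed

end
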